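(* Let $(a_n)_{\mathrm c}=[a_{n\varepsilon}]_{\mathrm c}\in\widetilde{\mathbb C}_{\mathrm c}$, $c=[c_\varepsilon]\in\widetilde{\mathbb C}$, and let $U$ be the interior, in the sharp topology, of $S((a_n)_{\mathrm c},c)$. For $z=[z_\varepsilon]\in U$ set $$f(z):=\sum_{n\in\widetilde{\mathbb N}}a_n(z-c)^n=\Big[\sum_{n=0}^{\infty}a_{n\varepsilon}(z_\varepsilon-c_\varepsilon)^n\Big]=:[v_\varepsilon(z_\varepsilon)].$$ Then $f$ is a generalized holomorphic function on $U$, $f\in\mathcal{GH}(U)$, defined by the net $(v_\varepsilon)$.
   Context: Fix $I=(0,1]$ and a gauge $\rho=(\rho_\varepsilon)_{\varepsilon\in I}$ with $\rho_\varepsilon\in I$ and $\rho_\varepsilon\to0$ as $\varepsilon\to0$. "$\forall^0\varepsilon$" means "for all sufficiently small $\varepsilon\in I$". A net $(x_\varepsilon)\in\mathbb C^I$ is $\rho$-moderate ($(x_\varepsilon)\in\mathbb C_\rho$) if $\exists N\in\mathbb N\,\forall^0\varepsilon:|x_\varepsilon|\le\rho_\varepsilon^{-N}$, and $\rho$-negligible if $\forall q\in\mathbb N\,\forall^0\varepsilon:|x_\varepsilon|\le\rho_\varepsilon^q$. $\widetilde{\mathbb C}:=\mathbb C_\rho/\{\text{negligible nets}\}$ with classes $[x_\varepsilon]$; $\widetilde{\mathbb R}\subseteq\widetilde{\mathbb C}$ consists of classes of real moderate nets; $\mathrm d\rho:=[\rho_\varepsilon]$, $|[z_\varepsilon]|:=[|z_\varepsilon|]$.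 On $\widetilde{\mathbb R}$: $[x_\varepsilon]\le[y_\varepsilon]$ iff $x_\varepsilon\le y_\varepsilon+z_\varepsilon$ $\forall^0\varepsilon$ for some negligible $(z_\varepsilon)$; $x<y$ iff $\exists m\,\forall^0\varepsilon:y_\varepsilon-x_\varepsilon>\rho_\varepsilon^m$; $\widetilde{\mathbb R}_{>0}:=\{x:x>0\}$. The sharp topology on $\widetilde{\mathbb C}$ is generated by $B_r(c):=\{z:|z-c|<r\}$, $r\in\widetilde{\mathbb R}_{>0}$. Hypernatural numbers: $\widetilde{\mathbb N}:=\{[n_\varepsilon]\in\widetilde{\mathbb R}:n_\varepsilon\in\mathbb N\ \forall\varepsilon\}$; for each $N\in\widetilde{\mathbb N}$ a representative $(\mathrm{ni}(N)_\varepsilon)$ with all $\mathrm{ni}(N)_\varepsilon\in\mathbb N$ is fixed. Hyperlimit: $l=\lim_{n\in\widetilde{\mathbb N}}a_n$ means $\forall q\,\exists M\in\widetilde{\mathbb N}\,\forall n\in\widetilde{\mathbb N}:n\ge M\Rightarrow|a_n-l|<\mathrm d\rho^q$. Hyperseries: a net $(a_{n\varepsilon})_{n\in\mathbb N,\varepsilon\in I}$ is moderate over hypersums if for every $N\in\widetilde{\mathbb N}$ the net $(\sum_{n=0}^{\mathrm{ni}(N)_\varepsilon}a_{n\varepsilon})_\varepsilon$ is $\rho$-moderate; two such nets are equivalent if for all $N,M\in\widetilde{\mathbb N}$ the net $(\sum_{n=\mathrm{ni}(N)_\varepsilon}^{\mathrm{ni}(M)_\varepsilon}(a_{n\varepsilon}-\bar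 a_{n\varepsilon}))_\varepsilon$ is negligible; the quotient is $\widetilde{\mathbb C}_{\mathrm s}$ with classes $[b_{n\varepsilon}]_{\mathrm s}$. $\sum_{n=N}^Mb_n:=[\sum_{n=\mathrm{ni}(N)_\varepsilon}^{\mathrm{ni}(M)_\varepsilon}b_{n\varepsilon}]$, and $\sum_{n\in\widetilde{\mathbb N}}b_n:=\lim_{N\in\widetilde{\mathbb N}}\sum_{n=0}^Nb_n$ when this exists. Coefficients: $\widetilde{\mathbb C}_{\mathrm c}$ is the set of weakly $\rho$-moderate nets $(a_{n\varepsilon})$ ($\exists Q,R\in\mathbb N\,\forall^0\varepsilon\,\forall n\in\mathbb N:|a_{n\varepsilon}|\le\rho_\varepsilon^{-nQ-R}$) modulo strong equivalence ($\forall q,r\,\forall^0\varepsilon\,\forall n:|a_{n\varepsilon}-\bar a_{n\varepsilon}|\le\rho_\varepsilon^{nq+r}$), classes $(a_n)_{\mathrm c}=[a_{n\varepsilon}]_{\mathrm c}$. $\widetilde{\mathbb R}_\infty:=(\mathbb R\cup\{\pm\infty\})^I/\sim_\rho$, and for $x\in\widetilde{\mathbb R}$, $y\in\widetilde{\mathbb R}_\infty$, $x<y$ iff $\exists m\,\forall^0\varepsilon:y_\varepsilon>x_\varepsilon+\rho_\varepsilon^m$. Radius: $\mathrm{rad}(a_n)_{\mathrm c}:=[(\limsup_n|a_{n\varepsilon}|^{1/n})^{-1}]\in\widetilde{\mathbb R}_\infty$. Set of convergence: $S((a_n)_{\mathrm c},c)$ is the set of $z\in\widetilde{\mathbb C}$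 with $|z-c|<\mathrm{rad}(a_n)_{\mathrm c}$ for which there exist representatives $z=[z_\varepsilon]$, $c=[c_\varepsilon]$, $(a_n)_{\mathrm c}=[a_{n\varepsilon}]_{\mathrm c}$ such that: (a) the net $(a_{n\varepsilon}(z_\varepsilon-c_\varepsilon)^n)_{n,\varepsilon}$ is moderate over hypersums; (b) $\sum_{n\in\widetilde{\mathbb N}}a_n(z-c)^n$ converges and equals $[\sum_{n=0}^{\infty}a_{n\varepsilon}(z_\varepsilon-c_\varepsilon)^n]$; (c) for every representative $z=[\hat z_\varepsilon]$, the net $(\sum_{n\ge1}na_{n\varepsilon}(\hat z_\varepsilon-c_\varepsilon)^{n-1})_\varepsilon$ is $\rho$-moderate (these conditions hold for any representatives once they hold for some). Generalized holomorphic functions: for $U\subseteq\widetilde{\mathbb C}$ sharply open, $f:U\to\widetilde{\mathbb C}$ is a GHF, $f\in\mathcal{GH}(U)$, if there exist open sets $\Omega_\varepsilon\subseteq\mathbb C$ and holomorphic $f_\varepsilon:\Omega_\varepsilon\to\mathbb C$ such that for every $z\in U$ and every representative $z=[z_\varepsilon]$: $z_\varepsilon\in\Omega_\varepsilon$ $\forall^0\varepsilon$, $f(z)=[f_\varepsilon(z_\varepsilon)]$, and $(f_\varepsilon^{(k)}(z_\varepsilon))\in\mathbb C_\rho$ for all $k\in\mathbb N$; $f$ is then said to be defined by $(f_\varepsilon)$. *)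

theory Defs
  imports "HOL-Complex_Analysis.Complex_Analysis"
begin

(* Nets are functions real => complex; only the values on I = (0,1] near 0 matter.
   "for all sufficiently small eps in I" is  eventually _ (at_right 0).
   Generalized numbers are equivalence classes, represented as sets of nets. *)

type_synonym net = "real \<Rightarrow> complex"
type_synonym gnum = "net set"

definition gauge :: "(real \<Rightarrow> real) \<Rightarrow> bool" where
  "gauge rho \<longleftrightarrow> (\<forall>e\<in>{0<..1}. rho e \<in> {0<..1}) \<and> (rho \<longlongrightarrow> 0) (at_right 0)"

definition moderate :: "(real \<Rightarrow> real) \<Rightarrow> net \<Rightarrow> bool" where
  "moderate rho x \<longleftrightarrow> (\<exists>N::nat. eventually (\<lambda>e. cmod (x e) \<le> inverse (rho e ^ N)) (at_right 0))"

definition negligible :: "(real \<Rightarrow> real) \<Rightarrow> net \<Rightarrow> bool" where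
  "negligible rho x \<longleftrightarrow> (\<forall>q::nat. eventually (\<lambda>e. cmod (x e) \<le> rho e ^ q) (at_right 0))"

definition gclass :: "(real \<Rightarrow> real) \<Rightarrow> net \<Rightarrow> gnum" where
  "gclass rho x = {y. moderate rho y \<and> negligible rho (\<lambda>e. y e - x e)}"

definition Ctil :: "(real \<Rightarrow> real) \<Rightarrow> gnum set" where
  "Ctil rho = {gclass rho x | x. moderate rho x}"

definition real_net :: "net \<Rightarrow> bool" where
  "real_net x \<longleftrightarrow> (\<forall>e. x e \<in> \<real>)"

definition Rtil :: "(real \<Rightarrow> real) \<Rightarrow> gnum set" where
  "Rtil rho = {gclass rho x | x. moderate rho x \<and> real_net x}"

definition rep :: "(real \<Rightarrow> real) \<Rightarrow> gnum \<Rightarrow> net" where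
  "rep rho X = (SOME x. moderate rho x \<and> X = gclass rho x)"

definition gdiff :: "(real \<Rightarrow> real) \<Rightarrow> gnum \<Rightarrow> gnum \<Rightarrow> gnum" where
  "gdiff rho X Y = gclass rho (\<lambda>e. rep rho X e - rep rho Y e)"

definition gabs :: "(real \<Rightarrow> real) \<Rightarrow> gnum \<Rightarrow> gnum" where
  "gabs rho X = gclass rho (\<lambda>e. complex_of_real (cmod (rep rho X e)))"

definition drho_pow :: "(real \<Rightarrow> real) \<Rightarrow> nat \<Rightarrow> gnum" where
  "drho_pow rho q = gclass rho (\<lambda>e. complex_of_real (rho e ^ q))"

definition gle :: "(real \<Rightarrow> real) \<Rightarrow> gnum \<Rightarrow> gnum \<Rightarrow> bool" where
  "gle rho X Y \<longleftrightarrow> (\<exists>x y z. moderate rho x \<and> real_net x \<and> X = gclass rho x \<and>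
      moderate rho y \<and> real_net y \<and> Y = gclass rho y \<and> negligible rho z \<and> real_net z \<and>
      eventually (\<lambda>e. Re (x e) \<le> Re (y e) + Re (z e)) (at_right 0))"

definition glt :: "(real \<Rightarrow> real) \<Rightarrow> gnum \<Rightarrow> gnum \<Rightarrow> bool" where
  "glt rho X Y \<longleftrightarrow> (\<exists>x y. moderate rho x \<and> real_net x \<and> X = gclass rho x \<and>
      moderate rho y \<and> real_net y \<and> Y = gclass rho y \<and>
      (\<exists>m::nat. eventually (\<lambda>e. Re (y e) - Re (x e) > rho e ^ m) (at_right 0)))"

definition sharp_ball :: "(real \<Rightarrow> real) \<Rightarrow> gnum \<Rightarrow> gnum \<Rightarrow> gnum set" where
  "sharp_ball rho c r = {z \<in> Ctil rho. glt rho (gabs rho (gdiff rho z c)) r}"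

definition sharp_topology :: "(real \<Rightarrow> real) \<Rightarrow> gnum topology" where
  "sharp_topology rho = topology_generated_by
     {sharp_ball rho c r | c r. c \<in> Ctil rho \<and> r \<in> Rtil rho \<and> glt rho (gclass rho (\<lambda>e. 0)) r}"

definition Ntil :: "(real \<Rightarrow> real) \<Rightarrow> gnum set" where
  "Ntil rho = {X \<in> Rtil rho. \<exists>n :: real \<Rightarrow> nat. X = gclass rho (\<lambda>e. of_nat (n e))}"

definition ni :: "(real \<Rightarrow> real) \<Rightarrow> gnum \<Rightarrow> real \<Rightarrow> nat" where
  "ni rho N = (SOME n. N = gclass rho (\<lambda>e. of_nat (n e)))"

definition hyperlim :: "(real \<Rightarrow> real) \<Rightarrow> (gnum \<Rightarrow> gnum) \<Rightarrow> gnum \<Rightarrow> bool" where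
  "hyperlim rho a l \<longleftrightarrow> l \<in> Ctil rho \<and>
     (\<forall>q::nat. \<exists>M\<in>Ntil rho. \<forall>n\<in>Ntil rho. gle rho M n \<longrightarrow>
        glt rho (gabs rho (gdiff rho (a n) l)) (drho_pow rho q))"

definition moderate_hypersums :: "(real \<Rightarrow> real) \<Rightarrow> (nat \<Rightarrow> net) \<Rightarrow> bool" where
  "moderate_hypersums rho b \<longleftrightarrow>
     (\<forall>N\<in>Ntil rho. moderate rho (\<lambda>e. \<Sum>n\<le>ni rho N e. b n e))"

definition hypersum :: "(real \<Rightarrow> real) \<Rightarrow> (nat \<Rightarrow> net) \<Rightarrow> gnum \<Rightarrow> gnum \<Rightarrow> gnum" where
  "hypersum rho b N M = gclass rho (\<lambda>e. \<Sum>n\<in>{ni rho N e..ni rho M e}. b n e)"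

definition gzero :: "(real \<Rightarrow> real) \<Rightarrow> gnum" where
  "gzero rho = gclass rho (\<lambda>e. 0)"

definition hyperseries_converges_to :: "(real \<Rightarrow> real) \<Rightarrow> (nat \<Rightarrow> net) \<Rightarrow> gnum \<Rightarrow> bool" where
  "hyperseries_converges_to rho b l \<longleftrightarrow> hyperlim rho (\<lambda>N. hypersum rho b (gzero rho) N) l"

definition hyperseries :: "(real \<Rightarrow> real) \<Rightarrow> (nat \<Rightarrow> net) \<Rightarrow> gnum" where
  "hyperseries rho b = (THE l. hyperseries_converges_to rho b l)"

definition weakly_moderate :: "(real \<Rightarrow> real) \<Rightarrow> (nat \<Rightarrow> net) \<Rightarrow> bool" where
  "weakly_moderate rho a \<longleftrightarrow> (\<exists>Q R::nat. eventually
     (\<lambda>e. \<forall>n. cmod (a n e) \<le> inverse (rho e ^ (n * Q + R))) (at_right 0))"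

definition strongly_equiv :: "(real \<Rightarrow> real) \<Rightarrow> (nat \<Rightarrow> net) \<Rightarrow> (nat \<Rightarrow> net) \<Rightarrow> bool" where
  "strongly_equiv rho a a' \<longleftrightarrow> (\<forall>q r::nat. eventually
     (\<lambda>e. \<forall>n. cmod (a n e - a' n e) \<le> rho e ^ (n * q + r)) (at_right 0))"

definition rad_net :: "(nat \<Rightarrow> net) \<Rightarrow> real \<Rightarrow> ereal" where
  "rad_net a e = inverse (limsup (\<lambda>n. ereal (root n (cmod (a n e)))))"

(* set of convergence S((a_n)_c, c), for representatives a of the coefficient class and c *)
definition conv_set :: "(real \<Rightarrow> real) \<Rightarrow> (nat \<Rightarrow> net) \<Rightarrow> net \<Rightarrow> gnum set" where
  "conv_set rho a c = {z \<in> Ctil rho.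
     (\<exists>z'\<in>z. \<exists>m::nat. eventually
        (\<lambda>e. rad_net a e > ereal (cmod (z' e - c e)) + ereal (rho e ^ m)) (at_right 0)) \<and>
     (\<exists>z'\<in>z. \<exists>c'\<in>gclass rho c. \<exists>a'. weakly_moderate rho a' \<and> strongly_equiv rho a a' \<and>
        moderate_hypersums rho (\<lambda>n e. a' n e * (z' e - c' e) ^ n) \<and>
        hyperseries_converges_to rho (\<lambda>n e. a' n e * (z' e - c' e) ^ n)
          (gclass rho (\<lambda>e. \<Sum>n. a' n e * (z' e - c' e) ^ n)) \<and>
        (\<forall>zh\<in>z. moderate rho (\<lambda>e. \<Sum>n. of_nat (Suc n) * a' (Suc n) e * (zh e - c' e) ^ n)))}"

definition GH_defined_by :: "(real \<Rightarrow> real) \<Rightarrow> gnum set \<Rightarrow> (gnum \<Rightarrow> gnum)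
    \<Rightarrow> (real \<Rightarrow> complex set) \<Rightarrow> (real \<Rightarrow> complex \<Rightarrow> complex) \<Rightarrow> bool" where
  "GH_defined_by rho U f Omega F \<longleftrightarrow>
     openin (sharp_topology rho) U \<and> U \<subseteq> Ctil rho \<and>
     (\<forall>e\<in>{0<..1}. open (Omega e) \<and> F e holomorphic_on Omega e) \<and>
     (\<forall>z\<in>U. \<forall>z'\<in>z. eventually (\<lambda>e. z' e \<in> Omega e) (at_right 0) \<and>
        f z = gclass rho (\<lambda>e. F e (z' e)) \<and>
        (\<forall>k::nat. moderate rho (\<lambda>e. (deriv ^^ k) (F e) (z' e))))"

end

theory Submission
  imports Defs
begin

text \<open>Fix \<open>z \<in> U\<close> and any representative \<open>z'\<close>. Membership in \<open>S\<close> only provides some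
  representatives \<open>a'\<close>, \<open>z''\<close>, \<open>c'\<close> for which the hyperseries converges to
  \<open>[\<Sum>n. a'\<^sub>n (z'' - c')\<^sup>n]\<close> and the derivative series is moderate on the whole class of \<open>z\<close>;
  everything has to be transported to \<open>a\<close>, \<open>z'\<close>, \<open>c\<close>.
  Replacing \<open>a'\<close> by the strongly equivalent \<open>a\<close> changes partial sums and values by negligible
  nets, because \<open>|a\<^sub>n - a'\<^sub>n| \<le> \<rho>\<^bsup>nq+r\<^esup>\<close>. Moving the point by a negligible amount changes the
  value negligibly by the mean value theorem, the derivative series being moderate along the
  segment, and it changes the partial sums up to any hypernatural \<open>N\<close> negligibly by Abel
  summation, which only needs the partial sums to be moderate. So the hypersums defining
  \<open>f z\<close> agree with those of the witness, and \<open>f z = [v\<^sub>\<epsilon>(z'\<^sub>\<epsilon>)]\<close>.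
  For the derivatives, a sharp ball of radius \<open>d\<rho>\<^sup>p\<close> about \<open>z\<close> lies in \<open>S\<close>. On a disc of
  radius \<open>\<rho>\<^sub>\<epsilon>\<^bsup>p+1\<^esup>\<close> or smaller about \<open>z'\<^sub>\<epsilon>\<close>, \<open>|v\<^sub>\<epsilon>|\<close> is maximal at some \<open>w\<^sub>\<epsilon>\<close> whose class lies in
  that ball, hence in \<open>S\<close>, so the maximum is moderate and Cauchy's estimates make every
  derivative moderate.\<close>

section \<open>Estimates for complex power series\<close>

lemma power_gap_quarter:
  fixes r :: real
  assumes "0 < r" "r \<le> 1/4"
  shows "r ^ (m+1) + 2 * r ^ (m+2) < r ^ m"
proof -
  have "r * r \<le> r / 4" using assms by (simp add: mult_left_mono)
  then have "r + 2 * (r * r) < 1" using assms by linarith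
  then have "r ^ m * (r + 2 * (r * r)) < r ^ m * 1" using assms by (intro mult_strict_left_mono) auto
  then show ?thesis by (simp add: power_add power2_eq_square algebra_simps)
qed

lemma real_mult_power_le_one:
  fixes y :: real
  assumes "0 \<le> y" "y \<le> 1/2"
  shows "real n * y ^ n \<le> 1"
proof -
  have "real n \<le> real (2 ^ n)" by (simp add: less_exp less_imp_le)
  then have "real n \<le> 2 ^ n" by simp
  then have "real n * y ^ n \<le> 2 ^ n * (1/2) ^ n"
    using assms by (intro mult_mono power_mono) auto
  also have "\<dots> = 1" by (simp add: power_mult_distrib[symmetric])
  finally show ?thesis .
qed

lemma inverse_power_le_inverse_power:
  fixes r :: real
  assumes "0 < r" "r \<le> 1" "m \<le> n"
  shows "inverse (r ^ m) \<le> inverse (r ^ n)"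
  using assms by (intro le_imp_inverse_le power_decreasing) auto

lemma norm_power_diff_le:
  fixes x y :: complex
  assumes "cmod x \<le> s" "cmod y \<le> s" "0 < s"
  shows "s * cmod (x ^ n - y ^ n) \<le> real n * s ^ n * cmod (x - y)"
proof -
  have "cmod ((x / s) ^ n - (y / s) ^ n) \<le> real n * cmod (x / s - y / s)"
    using assms by (intro norm_power_diff) (auto simp: norm_divide)
  also have "(x / s) ^ n - (y / s) ^ n = (x ^ n - y ^ n) / s ^ n"
    by (simp add: power_divide diff_divide_distrib)
  also have "x / s - y / s = (x - y) / s" by (simp add: diff_divide_distrib)
  finally have "cmod (x ^ n - y ^ n) / s ^ n \<le> real n * (cmod (x - y) / s)"
    using assms by (simp add: norm_divide norm_power)
  then show ?thesis using assms by (simp add: field_simps)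
qed

lemma geometric_half_bound:
  fixes f :: "nat \<Rightarrow> complex"
  assumes "\<And>n. cmod (f n) \<le> A * (1/2) ^ n"
  shows "cmod (suminf f) \<le> 2 * A" "cmod (\<Sum>n\<le>N. f n) \<le> 2 * A"
proof -
  have sg: "summable (\<lambda>n. A * (1/2::real) ^ n)" by (intro summable_mult summable_geometric) simp
  have sv: "(\<Sum>n. A * (1/2::real) ^ n) = 2 * A" by (simp add: suminf_mult suminf_geometric)
  have A0: "A \<ge> 0" using order.trans[OF norm_ge_zero assms[of 0]] by simp
  show "cmod (suminf f) \<le> 2 * A" using norm_suminf_le[OF assms sg] sv by simp
  have "cmod (\<Sum>n\<le>N. f n) \<le> (\<Sum>n\<le>N. A * (1/2) ^ n)"
    by (rule order.trans[OF norm_sum sum_mono]) (use assms in auto)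
  also have "\<dots> \<le> (\<Sum>n. A * (1/2::real) ^ n)" by (rule sum_le_suminf[OF sg]) (use A0 in auto)
  finally show "cmod (\<Sum>n\<le>N. f n) \<le> 2 * A" using sv by simp
qed

lemma summation_by_parts_atMost:
  fixes b w :: "nat \<Rightarrow> 'a :: comm_ring"
  shows "(\<Sum>n\<le>N. b n * w n) = (\<Sum>j\<le>N. b j) * w N - (\<Sum>n<N. (\<Sum>j\<le>n. b j) * (w (Suc n) - w n))"
  by (induction N) (simp_all add: algebra_simps)

lemma norm_sum_mult_binomial_power_le:
  fixes b :: "nat \<Rightarrow> complex" and t :: complex
  assumes B: "\<And>k. k \<le> N \<Longrightarrow> cmod (\<Sum>j\<le>k. b j) \<le> B"
  shows "cmod (\<Sum>n\<le>N. b n * ((1 + t) ^ n - 1)) \<le> 2 * B * (real N * (cmod t * (1 + cmod t) ^ N))"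
proof -
  define w where "w = (\<lambda>n. (1 + t) ^ n - 1)"
  have B0: "B \<ge> 0" by (rule order.trans[OF norm_ge_zero B[OF le0]])
  have dw: "cmod (w (Suc n) - w n) \<le> cmod t * (1 + cmod t) ^ N" if "n < N" for n
  proof -
    have "cmod (w (Suc n) - w n) = cmod t * cmod (1 + t) ^ n"
      unfolding w_def by (simp add: algebra_simps norm_mult norm_power)
    also have "\<dots> \<le> cmod t * (1 + cmod t) ^ n"
      by (intro mult_left_mono power_mono) (auto intro: order.trans[OF norm_triangle_ineq])
    also have "\<dots> \<le> cmod t * (1 + cmod t) ^ N"
      using that by (intro mult_left_mono power_increasing) auto
    finally show ?thesis .
  qed
  have "w N = (\<Sum>n<N. w (Suc n) - w n)"
    using sum_lessThan_telescope[of w N] by (simp add: w_def)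
  then have wN: "cmod (w N) \<le> real N * (cmod t * (1 + cmod t) ^ N)"
    using sum_norm_le[of "{..<N}" "\<lambda>n. w (Suc n) - w n" "\<lambda>_. cmod t * (1 + cmod t) ^ N"] dw
    by simp
  have "cmod (\<Sum>n\<le>N. b n * w n) \<le> cmod ((\<Sum>j\<le>N. b j) * w N)
      + cmod (\<Sum>n<N. (\<Sum>j\<le>n. b j) * (w (Suc n) - w n))"
    unfolding summation_by_parts_atMost by (rule norm_triangle_ineq4)
  also have "cmod ((\<Sum>j\<le>N. b j) * w N) \<le> B * (real N * (cmod t * (1 + cmod t) ^ N))"
    unfolding norm_mult using B[of N] wN B0 by (intro mult_mono) auto
  also have "cmod (\<Sum>n<N. (\<Sum>j\<le>n. b j) * (w (Suc n) - w n))
      \<le> (\<Sum>n<N. B * (cmod t * (1 + cmod t) ^ N))"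
    by (rule order.trans[OF norm_sum sum_mono]) (auto simp: norm_mult intro!: mult_mono B dw B0)
  finally show ?thesis unfolding w_def by simp
qed

text \<open>Moving the point of a partial sum: far from the centre, Abel summation controls the change
  through the partial sums alone; near the centre, the powers of the point compensate the growth of
  the coefficients and a termwise bound suffices.\<close>

lemma norm_partial_powser_diff_le_far:
  fixes b :: "nat \<Rightarrow> complex"
  assumes B: "\<And>j. j \<le> N \<Longrightarrow> cmod (\<Sum>i\<le>j. b i * u0 ^ i) \<le> B"
    and u0: "u0 \<noteq> 0" and close: "real N * cmod (u1 - u0) \<le> cmod u0"
  shows "cmod (\<Sum>n\<le>N. b n * u1 ^ n - b n * u0 ^ n) \<le> 6 * B * real N * cmod (u1 - u0) / cmod u0"
proof -
  define t where "t = (u1 - u0) / u0"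
  have u1: "u1 = u0 * (1 + t)" unfolding t_def using u0 by (simp add: field_simps)
  have Nt: "real N * cmod t \<le> 1"
    using close u0 unfolding t_def by (simp add: norm_divide field_simps)
  have B0: "B \<ge> 0" by (rule order.trans[OF norm_ge_zero B[OF le0]])
  have "(1 + cmod t) ^ N \<le> exp (cmod t) ^ N" by (intro power_mono) auto
  also have "\<dots> = exp (real N * cmod t)" by (simp add: exp_of_nat_mult)
  also have "\<dots> \<le> exp 1" using Nt by simp
  also have "\<dots> \<le> 3" by (rule exp_le)
  finally have exp3: "(1 + cmod t) ^ N \<le> 3" .
  have "(\<Sum>n\<le>N. b n * u1 ^ n - b n * u0 ^ n) = (\<Sum>n\<le>N. (b n * u0 ^ n) * ((1 + t) ^ n - 1))"
    unfolding u1 by (intro sum.cong refl) (subst power_mult_distrib, simp add: algebra_simps)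
  also have "cmod \<dots> \<le> 2 * B * (real N * cmod t * (1 + cmod t) ^ N)"
    using norm_sum_mult_binomial_power_le[of N "\<lambda>n. b n * u0 ^ n" B t] B by (simp add: mult_ac)
  also have "\<dots> \<le> 2 * B * (real N * cmod t * 3)"
    using B0 exp3 by (intro mult_left_mono) auto
  also have "\<dots> = 6 * B * real N * cmod (u1 - u0) / cmod u0"
    unfolding t_def by (simp add: norm_divide)
  finally show ?thesis .
qed

lemma norm_partial_powser_diff_le_near:
  fixes b :: "nat \<Rightarrow> complex"
  assumes b: "\<And>n. cmod (b n) \<le> C * \<alpha> ^ n"
    and s: "cmod u0 \<le> s" "cmod u1 \<le> s" "0 < s"
    and \<alpha>: "0 \<le> \<alpha>" "\<alpha> * s \<le> 1/2"
  shows "cmod (\<Sum>n\<le>N. b n * u1 ^ n - b n * u0 ^ n) \<le> (real N + 1) * (C * cmod (u1 - u0) / s)"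
proof -
  have "cmod (b 0) \<le> C" using b[of 0] by simp
  then have C0: "C \<ge> 0" by (rule order.trans[OF norm_ge_zero])
  have term_le: "cmod (b n * u1 ^ n - b n * u0 ^ n) \<le> C * cmod (u1 - u0) / s" for n
  proof -
    have "cmod (b n * u1 ^ n - b n * u0 ^ n) = cmod (b n) * cmod (u1 ^ n - u0 ^ n)"
      by (simp add: norm_mult[symmetric] right_diff_distrib)
    also have "\<dots> \<le> (C * \<alpha> ^ n) * (real n * s ^ n * cmod (u1 - u0) / s)"
      using b[of n] norm_power_diff_le[OF s(2,1,3), of n] s(3) C0 \<alpha>
      by (intro mult_mono) (auto simp: field_simps)
    also have "\<dots> = (real n * (\<alpha> * s) ^ n) * (C * cmod (u1 - u0) / s)"
      by (simp add: power_mult_distrib)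
    also have "\<dots> \<le> 1 * (C * cmod (u1 - u0) / s)"
      using real_mult_power_le_one[of "\<alpha> * s" n] \<alpha> s(3) C0
      by (intro mult_right_mono) auto
    finally show ?thesis by simp
  qed
  have "cmod (\<Sum>n\<le>N. b n * u1 ^ n - b n * u0 ^ n) \<le> (\<Sum>n\<le>N. C * cmod (u1 - u0) / s)"
    by (rule order.trans[OF norm_sum sum_mono]) (rule term_le)
  then show ?thesis by (simp add: add.commute)
qed

lemma norm_partial_powser_diff_le:
  fixes b :: "nat \<Rightarrow> complex" and r :: real
  assumes r: "0 < r" "r \<le> 1/4"
    and b: "\<And>n. cmod (b n) \<le> inverse (r ^ (n * Q + R))"
    and B: "\<And>j. j \<le> N \<Longrightarrow> cmod (\<Sum>i\<le>j. b i * u0 ^ i) \<le> inverse (r ^ K)"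
    and N: "real N \<le> inverse (r ^ P)"
    and \<delta>: "cmod (u1 - u0) \<le> r ^ (P + Q + 1)"
  shows "cmod (\<Sum>n\<le>N. b n * u1 ^ n - b n * u0 ^ n)
    \<le> 6 * inverse (r ^ (K + P + Q + 1 + R)) * cmod (u1 - u0)"
proof -
  define S where "S = r ^ (Q + 1)"
  define d where "d = cmod (u1 - u0)"
  have S: "0 < S" "S \<le> 1" unfolding S_def using r by (simp, intro power_le_one) auto
  have "r ^ (P + Q + 1) \<le> S" unfolding S_def using r by (intro power_decreasing) auto
  then have d: "0 \<le> d" "d \<le> S" using \<delta> unfolding d_def by auto
  have iK: "0 \<le> inverse (r ^ K)" and iR: "0 \<le> inverse (r ^ R)" using r by auto
  show ?thesis
  proof (cases "S \<le> cmod u0")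
    case True
    have "real N * d \<le> inverse (r ^ P) * r ^ (P + Q + 1)"
      using N \<delta> r unfolding d_def by (intro mult_mono) auto
    also have "\<dots> = S" unfolding S_def using r by (simp add: power_add)
    finally have "real N * cmod (u1 - u0) \<le> cmod u0" using True unfolding d_def by linarith
    then have "cmod (\<Sum>n\<le>N. b n * u1 ^ n - b n * u0 ^ n) \<le> 6 * inverse (r ^ K) * real N * d / cmod u0"
      using True S unfolding d_def by (intro norm_partial_powser_diff_le_far B) auto
    also have "\<dots> \<le> 6 * inverse (r ^ K) * inverse (r ^ P) * d / S"
    proof -
      have "6 * inverse (r ^ K) * real N * d \<le> 6 * inverse (r ^ K) * inverse (r ^ P) * d"
        using N iK d by (intro mult_right_mono mult_left_mono) auto
      then show ?thesis using True S iK d r by (intro frac_le) auto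
    qed
    also have "\<dots> = 6 * inverse (r ^ (K + P + Q + 1)) * d"
      unfolding S_def using r by (simp add: power_add field_simps)
    also have "\<dots> \<le> 6 * inverse (r ^ (K + P + Q + 1 + R)) * d"
      using inverse_power_le_inverse_power[of r "K + P + Q + 1" "K + P + Q + 1 + R"] r d
      by (intro mult_right_mono mult_left_mono) auto
    finally show ?thesis unfolding d_def .
  next
    case False
    have u1: "cmod u1 \<le> 2 * S"
      using False d norm_triangle_ineq[of u0 "u1 - u0"] unfolding d_def by simp
    have bQR: "cmod (b n) \<le> inverse (r ^ R) * inverse (r ^ Q) ^ n" for n
      using b[of n] r by (simp add: power_add power_mult power_inverse mult.commute)
    have QS: "inverse (r ^ Q) * (2 * S) \<le> 1/2" unfolding S_def using r by (simp add: field_simps)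
    have u0: "cmod u0 \<le> 2 * S" using False S by simp
    have "cmod (\<Sum>n\<le>N. b n * u1 ^ n - b n * u0 ^ n)
        \<le> (real N + 1) * (inverse (r ^ R) * cmod (u1 - u0) / (2 * S))"
      by (rule norm_partial_powser_diff_le_near[OF bQR u0 u1 _ _ QS]) (use S r in auto)
    also have "\<dots> = (real N + 1) * (inverse (r ^ R) * d / (2 * S))" unfolding d_def ..
    also have "\<dots> \<le> (2 * inverse (r ^ P)) * (inverse (r ^ R) * d / (2 * S))"
    proof -
      have "1 \<le> inverse (r ^ P)" using r by (simp add: one_le_inverse power_le_one)
      then have "real N + 1 \<le> 2 * inverse (r ^ P)" using N by linarith
      moreover have "0 \<le> inverse (r ^ R) * d / (2 * S)" using iR d S by simp
      ultimately show ?thesis by (rule mult_right_mono)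
    qed
    also have "\<dots> = inverse (r ^ (P + R + Q + 1)) * d"
      unfolding S_def using r by (simp add: power_add field_simps)
    also have "\<dots> \<le> 6 * inverse (r ^ (K + P + Q + 1 + R)) * d"
    proof -
      have "inverse (r ^ (P + R + Q + 1)) \<le> inverse (r ^ (K + P + Q + 1 + R))"
        using r by (intro inverse_power_le_inverse_power) auto
      moreover have "0 \<le> inverse (r ^ (K + P + Q + 1 + R))" using r by simp
      ultimately show ?thesis using d by (intro mult_right_mono) auto
    qed
    finally show ?thesis unfolding d_def .
  qed
qed

lemma has_field_derivative_powser_at:
  fixes b :: "nat \<Rightarrow> complex"
  assumes "ereal (cmod (w - c)) < conv_radius b"
  shows "((\<lambda>w. \<Sum>n. b n * (w - c) ^ n) has_field_derivative (\<Sum>n. diffs b n * (w - c) ^ n))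
    (at w within S)"
proof -
  have inner: "((\<lambda>w. w - c) has_field_derivative 1) (at w within S)"
    by (auto intro!: derivative_eq_intros)
  have outer: "((\<lambda>z. \<Sum>n. b n * z ^ n) has_field_derivative (\<Sum>n. diffs b n * (w - c) ^ n))
      (at (w - c))"
    using has_field_derivative_powser[OF assms, of UNIV] by simp
  from DERIV_chain'[OF inner outer] show ?thesis by simp
qed

lemma holomorphic_on_powser_eball:
  fixes b :: "nat \<Rightarrow> complex"
  shows "(\<lambda>w. \<Sum>n. b n * (w - c) ^ n) holomorphic_on eball c (conv_radius b)"
proof (subst holomorphic_on_open[OF open_eball], intro ballI)
  fix x assume "x \<in> eball c (conv_radius b)"
  then have "ereal (cmod (x - c)) < conv_radius b" by (simp add: dist_norm norm_minus_commute)
  from has_field_derivative_powser_at[OF this, of UNIV]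
  show "\<exists>f'. ((\<lambda>w. \<Sum>n. b n * (w - c) ^ n) has_field_derivative f') (at x)" by blast
qed

lemma continuous_on_powser_diffs:
  fixes b :: "nat \<Rightarrow> complex"
  shows "continuous_on (eball 0 (conv_radius b)) (\<lambda>x. \<Sum>n. diffs b n * x ^ n)"
proof -
  define g where "g = (\<lambda>w. \<Sum>n. b n * (w - 0) ^ n)"
  have "deriv g holomorphic_on eball 0 (conv_radius b)"
    unfolding g_def by (rule holomorphic_deriv[OF holomorphic_on_powser_eball open_eball])
  then have cont: "continuous_on (eball 0 (conv_radius b)) (deriv g)"
    by (rule holomorphic_on_imp_continuous_on)
  show ?thesis
  proof (rule continuous_on_cong[THEN iffD1, OF refl _ cont])
    fix x :: complex assume "x \<in> eball 0 (conv_radius b)"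
    then have "ereal (cmod (x - 0)) < conv_radius b" by simp
    from has_field_derivative_powser_at[OF this, of UNIV]
    show "deriv g x = (\<Sum>n. diffs b n * x ^ n)" unfolding g_def by (simp add: DERIV_imp_deriv)
  qed
qed

lemma powser_mean_value_bound:
  fixes b :: "nat \<Rightarrow> complex"
  assumes "closed_segment u0 u \<subseteq> eball 0 (conv_radius b)"
  obtains x where "x \<in> closed_segment u0 u"
    "cmod ((\<Sum>n. b n * u ^ n) - (\<Sum>n. b n * u0 ^ n)) \<le> cmod (\<Sum>n. diffs b n * x ^ n) * cmod (u - u0)"
proof -
  have "continuous_on (closed_segment u0 u) (\<lambda>y. cmod (\<Sum>n. diffs b n * y ^ n))"
    by (intro continuous_on_norm continuous_on_subset[OF continuous_on_powser_diffs assms])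
  then obtain x where x: "x \<in> closed_segment u0 u"
    "\<And>y. y \<in> closed_segment u0 u \<Longrightarrow> cmod (\<Sum>n. diffs b n * y ^ n) \<le> cmod (\<Sum>n. diffs b n * x ^ n)"
    using continuous_attains_sup[OF compact_segment, of u0 u] by force
  have "cmod ((\<Sum>n. b n * u ^ n) - (\<Sum>n. b n * u0 ^ n)) \<le> cmod (\<Sum>n. diffs b n * x ^ n) * cmod (u - u0)"
  proof (rule field_differentiable_bound[OF convex_closed_segment])
    fix y assume y: "y \<in> closed_segment u0 u"
    then have "ereal (norm y) < conv_radius b" using assms by auto
    from has_field_derivative_powser[OF this]
    show "((\<lambda>y. \<Sum>n. b n * y ^ n) has_field_derivative (\<Sum>n. diffs b n * y ^ n))
        (at y within closed_segment u0 u)" .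
    show "cmod (\<Sum>n. diffs b n * y ^ n) \<le> cmod (\<Sum>n. diffs b n * x ^ n)" using x(2) y .
  qed auto
  then show thesis by (rule that[OF x(1)])
qed

lemma norm_higher_deriv_powser_le:
  fixes b :: "nat \<Rightarrow> complex"
  assumes "ereal (cmod (z - c) + r) < conv_radius b" "0 < r" "0 < k"
  obtains w where "w \<in> cball z r"
    "cmod ((deriv ^^ k) (\<lambda>w. \<Sum>n. b n * (w - c) ^ n) z)
      \<le> fact k * (cmod (\<Sum>n. b n * (w - c) ^ n) + 1) / r ^ k"
proof -
  define V where "V = (\<lambda>w. \<Sum>n. b n * (w - c) ^ n)"
  have "cball z r \<subseteq> cball c (cmod (z - c) + r)"
  proof
    fix y assume "y \<in> cball z r"
    moreover have "dist c y \<le> dist c z + dist z y" by (rule dist_triangle)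
    moreover have "dist c z = cmod (z - c)" by (simp add: dist_norm norm_minus_commute)
    ultimately show "y \<in> cball c (cmod (z - c) + r)" by simp
  qed
  then have contV: "continuous_on (cball z r) V"
    unfolding V_def using powser_continuous_suminf[OF assms(1), of c] by (rule continuous_on_subset[rotated])
  then obtain w where w: "w \<in> cball z r" "\<And>y. y \<in> cball z r \<Longrightarrow> cmod (V y) \<le> cmod (V w)"
    using continuous_attains_sup[OF compact_cball _ continuous_on_norm[OF contV]] assms(2) by force
  have "ball z r \<subseteq> eball c (conv_radius b)"
  proof
    fix y assume "y \<in> ball z r"
    then have "ereal (dist c y) < ereal (cmod (z - c) + r)"
      using dist_triangle[of c y z] by (simp add: dist_norm norm_minus_commute)
    then have "ereal (dist c y) < conv_radius b" using assms(1) by (rule order.strict_trans)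
    then show "y \<in> eball c (conv_radius b)" by simp
  qed
  then have "V holomorphic_on ball z r"
    unfolding V_def by (rule holomorphic_on_subset[OF holomorphic_on_powser_eball])
  moreover have "V y \<in> ball 0 (cmod (V w) + 1)" if "y \<in> ball z r" for y
    using w(2)[of y] that by simp
  ultimately have "cmod ((deriv ^^ k) V z) \<le> fact k * (cmod (V w) + 1) / r ^ k"
    using assms(2,3) contV by (intro Cauchy_higher_deriv_bound[where y = 0]) auto
  then show thesis unfolding V_def by (rule that[OF w(1)])
qed

lemma eventually_higher_deriv_powser_bound:
  fixes a :: "nat \<Rightarrow> 'a \<Rightarrow> complex"
  assumes "\<forall>\<^sub>F e in F. ereal (cmod (z e - c e) + r e) < conv_radius (\<lambda>n. a n e) \<and> 0 < r e"
    and "0 < k"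
  obtains w where "\<forall>\<^sub>F e in F. w e \<in> cball (z e) (r e) \<and>
    cmod ((deriv ^^ k) (\<lambda>x. \<Sum>n. a n e * (x - c e) ^ n) (z e))
      \<le> fact k * (cmod (\<Sum>n. a n e * (w e - c e) ^ n) + 1) / r e ^ k"
proof -
  have "\<forall>e. \<exists>w. ereal (cmod (z e - c e) + r e) < conv_radius (\<lambda>n. a n e) \<and> 0 < r e \<longrightarrow>
      w \<in> cball (z e) (r e) \<and> cmod ((deriv ^^ k) (\<lambda>x. \<Sum>n. a n e * (x - c e) ^ n) (z e))
        \<le> fact k * (cmod (\<Sum>n. a n e * (w - c e) ^ n) + 1) / r e ^ k"
  proof
    fix e
    show "\<exists>w. ereal (cmod (z e - c e) + r e) < conv_radius (\<lambda>n. a n e) \<and> 0 < r e \<longrightarrow>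
      w \<in> cball (z e) (r e) \<and> cmod ((deriv ^^ k) (\<lambda>x. \<Sum>n. a n e * (x - c e) ^ n) (z e))
        \<le> fact k * (cmod (\<Sum>n. a n e * (w - c e) ^ n) + 1) / r e ^ k"
    proof (cases "ereal (cmod (z e - c e) + r e) < conv_radius (\<lambda>n. a n e) \<and> 0 < r e")
      case True
      then obtain w where "w \<in> cball (z e) (r e)"
        "cmod ((deriv ^^ k) (\<lambda>x. \<Sum>n. a n e * (x - c e) ^ n) (z e))
          \<le> fact k * (cmod (\<Sum>n. a n e * (w - c e) ^ n) + 1) / r e ^ k"
        using assms(2) by (elim conjE norm_higher_deriv_powser_le)
      then show ?thesis by blast
    qed blast
  qed
  from choice[OF this] obtain w where "\<forall>e. ereal (cmod (z e - c e) + r e) < conv_radius (\<lambda>n. a n e) \<and>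
      0 < r e \<longrightarrow> w e \<in> cball (z e) (r e) \<and>
        cmod ((deriv ^^ k) (\<lambda>x. \<Sum>n. a n e * (x - c e) ^ n) (z e))
          \<le> fact k * (cmod (\<Sum>n. a n e * (w e - c e) ^ n) + 1) / r e ^ k"
    by blast
  then show thesis using assms(1) by (intro that[of w]) (auto elim: eventually_mono)
qed

section \<open>Moderate and negligible nets\<close>

locale gauge_rho =
  fixes rho :: "real \<Rightarrow> real"
  assumes gauge: "gauge rho"
begin

lemma eventually_rho_in_unit: "\<forall>\<^sub>F e in at_right 0. 0 < rho e \<and> rho e \<le> 1"
proof -
  have "\<forall>\<^sub>F e in at_right 0. e \<in> {0<..1::real}"
    unfolding eventually_at_right_field by (intro exI[of _ 1]) auto
  then show ?thesis using gauge unfolding gauge_def by (auto elim: eventually_mono)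
qed

lemma eventually_rho_le_quarter: "\<forall>\<^sub>F e in at_right 0. 0 < rho e \<and> rho e \<le> 1/4"
proof -
  have "(rho \<longlongrightarrow> 0) (at_right 0)" using gauge unfolding gauge_def by simp
  from order_tendstoD(2)[OF this, of "1/4"] have "\<forall>\<^sub>F e in at_right 0. rho e < 1/4" by simp
  then show ?thesis using eventually_rho_in_unit by (auto elim: eventually_elim2)
qed

lemma eventually_mult_rho_power_le_one:
  obtains k :: nat where "\<forall>\<^sub>F e in at_right 0. C * rho e ^ k \<le> 1"
proof -
  obtain k :: nat where k: "C < 2 ^ k" using real_arch_pow[of 2 C] by auto
  have "\<forall>\<^sub>F e in at_right 0. C * rho e ^ k \<le> 1"
    using eventually_rho_le_quarter
  proof eventually_elim
    case (elim e)
    have "rho e ^ k \<le> (1/2) ^ k" using elim by (intro power_mono) auto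
    then have "C * rho e ^ k \<le> 2 ^ k * (1/2) ^ k"
      using k elim by (smt (verit) mult_mono zero_le_power)
    then show ?case by (simp add: power_mult_distrib[symmetric])
  qed
  then show thesis by (rule that)
qed

lemma negligibleI:
  assumes "\<And>q. \<forall>\<^sub>F e in at_right 0. cmod (x e) \<le> C * rho e ^ q"
  shows "negligible rho x"
  unfolding negligible_def
proof
  fix q :: nat
  obtain k where k: "\<forall>\<^sub>F e in at_right 0. C * rho e ^ k \<le> 1"
    by (rule eventually_mult_rho_power_le_one)
  show "\<forall>\<^sub>F e in at_right 0. cmod (x e) \<le> rho e ^ q"
    using assms[of "q + k"] k eventually_rho_in_unit
  proof eventually_elim
    case (elim e)
    then have "C * rho e ^ (q + k) \<le> rho e ^ q"
      using mult_right_mono[of "C * rho e ^ k" 1 "rho e ^ q"] by (simp add: power_add mult_ac)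
    then show ?case using elim by linarith
  qed
qed

lemma negligibleD: "negligible rho x \<Longrightarrow> \<forall>\<^sub>F e in at_right 0. cmod (x e) \<le> rho e ^ q"
  unfolding negligible_def by auto

lemma moderateI:
  assumes "\<forall>\<^sub>F e in at_right 0. cmod (x e) \<le> C * inverse (rho e ^ N)"
  shows "moderate rho x"
proof -
  obtain k where k: "\<forall>\<^sub>F e in at_right 0. C * rho e ^ k \<le> 1"
    by (rule eventually_mult_rho_power_le_one)
  have "\<forall>\<^sub>F e in at_right 0. cmod (x e) \<le> inverse (rho e ^ (N + k))"
    using assms k eventually_rho_in_unit
  proof eventually_elim
    case (elim e)
    then have "C * inverse (rho e ^ N) \<le> inverse (rho e ^ (N + k))"
      by (simp add: power_add field_simps)
    then show ?case using elim by linarith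
  qed
  then show ?thesis unfolding moderate_def by blast
qed

lemma moderateE:
  assumes "moderate rho x"
  obtains N where "\<forall>\<^sub>F e in at_right 0. cmod (x e) \<le> inverse (rho e ^ N)"
  using assms unfolding moderate_def by blast

lemma negligible_dominated:
  assumes "negligible rho y" "\<forall>\<^sub>F e in at_right 0. cmod (x e) \<le> C * cmod (y e)"
  shows "negligible rho x"
proof (rule negligibleI[where C = "max C 0"])
  fix q
  show "\<forall>\<^sub>F e in at_right 0. cmod (x e) \<le> max C 0 * rho e ^ q"
    using negligibleD[OF assms(1), of q] assms(2)
  proof eventually_elim
    case (elim e)
    have "C * cmod (y e) \<le> max C 0 * rho e ^ q"
      using elim(1) by (smt (verit) mult_left_mono mult_right_mono norm_ge_zero)
    then show ?case using elim by linarith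
  qed
qed

lemma moderate_dominated:
  assumes "moderate rho y" "\<forall>\<^sub>F e in at_right 0. cmod (x e) \<le> C * cmod (y e)"
  shows "moderate rho x"
proof -
  obtain N where N: "\<forall>\<^sub>F e in at_right 0. cmod (y e) \<le> inverse (rho e ^ N)"
    using assms(1) by (rule moderateE)
  show ?thesis
  proof (rule moderateI[where C = "max C 0" and N = N])
    show "\<forall>\<^sub>F e in at_right 0. cmod (x e) \<le> max C 0 * inverse (rho e ^ N)"
      using N assms(2)
    proof eventually_elim
      case (elim e)
      have "C * cmod (y e) \<le> max C 0 * inverse (rho e ^ N)"
        using elim(1) by (smt (verit) mult_left_mono mult_right_mono norm_ge_zero)
      then show ?case using elim by linarith
    qed
  qed
qed

lemma negligible_eventually_eq:
  "negligible rho x \<Longrightarrow> \<forall>\<^sub>F e in at_right 0. y e = x e \<Longrightarrow> negligible rho y"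
  by (rule negligible_dominated[of x y 1]) (auto elim: eventually_mono)

lemma moderate_eventually_eq:
  "moderate rho x \<Longrightarrow> \<forall>\<^sub>F e in at_right 0. y e = x e \<Longrightarrow> moderate rho y"
  by (rule moderate_dominated[of x y 1]) (auto elim: eventually_mono)

lemma negligible_zero: "negligible rho (\<lambda>e. 0)"
  by (rule negligibleI[of _ 0]) auto

lemma negligible_add:
  assumes "negligible rho x" "negligible rho y"
  shows "negligible rho (\<lambda>e. x e + y e)"
proof (rule negligibleI[of _ 2])
  fix q
  show "\<forall>\<^sub>F e in at_right 0. cmod (x e + y e) \<le> 2 * rho e ^ q"
    using negligibleD[OF assms(1), of q] negligibleD[OF assms(2), of q]
    by eventually_elim (smt (verit) norm_triangle_ineq)
qed

lemma negligible_minus: "negligible rho x \<Longrightarrow> negligible rho (\<lambda>e. - x e)"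
  unfolding negligible_def by simp

lemma negligible_diff:
  "negligible rho x \<Longrightarrow> negligible rho y \<Longrightarrow> negligible rho (\<lambda>e. x e - y e)"
  using negligible_add[of x "\<lambda>e. - y e"] negligible_minus[of y] by simp

lemma negligible_mult:
  assumes "moderate rho x" "negligible rho y"
  shows "negligible rho (\<lambda>e. x e * y e)"
proof -
  obtain N where N: "\<forall>\<^sub>F e in at_right 0. cmod (x e) \<le> inverse (rho e ^ N)"
    using assms(1) by (rule moderateE)
  show ?thesis
  proof (rule negligibleI[of _ 1])
    fix q
    show "\<forall>\<^sub>F e in at_right 0. cmod (x e * y e) \<le> 1 * rho e ^ q"
      using N negligibleD[OF assms(2), of "q + N"] eventually_rho_in_unit
    proof eventually_elim
      case (elim e)
      have "cmod (x e * y e) \<le> inverse (rho e ^ N) * rho e ^ (q + N)"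
        using elim by (simp add: norm_mult mult_mono)
      also have "\<dots> = rho e ^ q" using elim by (simp add: power_add)
      finally show ?case by simp
    qed
  qed
qed

lemma negligible_imp_moderate: "negligible rho x \<Longrightarrow> moderate rho x"
  unfolding moderate_def using negligibleD[of x 0] by (intro exI[of _ 0]) simp

lemma moderate_const: "moderate rho (\<lambda>e. C)"
  by (rule moderateI[where C = "cmod C" and N = 0]) auto

lemma moderate_add:
  assumes "moderate rho x" "moderate rho y"
  shows "moderate rho (\<lambda>e. x e + y e)"
proof -
  obtain N where N: "\<forall>\<^sub>F e in at_right 0. cmod (x e) \<le> inverse (rho e ^ N)"
    using assms(1) by (rule moderateE)
  obtain M where M: "\<forall>\<^sub>F e in at_right 0. cmod (y e) \<le> inverse (rho e ^ M)"
    using assms(2) by (rule moderateE)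
  show ?thesis
  proof (rule moderateI[where C = 2 and N = "N + M"])
    show "\<forall>\<^sub>F e in at_right 0. cmod (x e + y e) \<le> 2 * inverse (rho e ^ (N + M))"
      using N M eventually_rho_in_unit
    proof eventually_elim
      case (elim e)
      have "rho e ^ M \<le> 1" "rho e ^ N \<le> 1" using elim by (auto intro: power_le_one)
      then have "inverse (rho e ^ N) \<le> inverse (rho e ^ (N + M))"
          "inverse (rho e ^ M) \<le> inverse (rho e ^ (N + M))"
        using elim by (auto simp: power_add field_simps)
      then show ?case using elim norm_triangle_ineq[of "x e" "y e"] by linarith
    qed
  qed
qed

lemma moderate_mult:
  assumes "moderate rho x" "moderate rho y"
  shows "moderate rho (\<lambda>e. x e * y e)"
proof -
  obtain N where N: "\<forall>\<^sub>F e in at_right 0. cmod (x e) \<le> inverse (rho e ^ N)"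
    using assms(1) by (rule moderateE)
  obtain M where M: "\<forall>\<^sub>F e in at_right 0. cmod (y e) \<le> inverse (rho e ^ M)"
    using assms(2) by (rule moderateE)
  have "\<forall>\<^sub>F e in at_right 0. cmod (x e * y e) \<le> inverse (rho e ^ (N + M))"
    using N M eventually_rho_in_unit
  proof eventually_elim
    case (elim e)
    then have "cmod (x e * y e) \<le> inverse (rho e ^ N) * inverse (rho e ^ M)"
      by (simp add: norm_mult mult_mono)
    then show ?case by (simp add: power_add)
  qed
  then show ?thesis unfolding moderate_def by blast
qed

lemma moderate_minus: "moderate rho x \<Longrightarrow> moderate rho (\<lambda>e. - x e)"
  unfolding moderate_def by simp

lemma moderate_diff: "moderate rho x \<Longrightarrow> moderate rho y \<Longrightarrow> moderate rho (\<lambda>e. x e - y e)"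
  using moderate_add[of x "\<lambda>e. - y e"] moderate_minus[of y] by simp

lemma moderate_norm: "moderate rho x \<Longrightarrow> moderate rho (\<lambda>e. complex_of_real (cmod (x e)))"
  by (rule moderate_dominated[of x _ 1]) auto

lemma moderate_rho_power: "moderate rho (\<lambda>e. complex_of_real (rho e ^ p))"
proof (rule moderateI[of _ 1 0])
  show "\<forall>\<^sub>F e in at_right 0. cmod (complex_of_real (rho e ^ p)) \<le> 1 * inverse (rho e ^ 0)"
    using eventually_rho_in_unit by eventually_elim (simp add: norm_power power_le_one)
qed

lemma moderate_inverse_rho_power: "moderate rho (\<lambda>e. complex_of_real (inverse (rho e ^ j)))"
  unfolding moderate_def
  by (rule exI[of _ j])
    (use eventually_rho_in_unit in \<open>auto elim!: eventually_mono simp: norm_power norm_inverse\<close>)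

section \<open>Generalized numbers and sharp balls\<close>

lemma gclass_eqI: "negligible rho (\<lambda>e. x e - y e) \<Longrightarrow> gclass rho x = gclass rho y"
  unfolding gclass_def
proof (intro Collect_cong conj_cong refl iffI)
  fix z assume "negligible rho (\<lambda>e. x e - y e)" "negligible rho (\<lambda>e. z e - x e)"
  then show "negligible rho (\<lambda>e. z e - y e)" using negligible_add by fastforce
next
  fix z assume "negligible rho (\<lambda>e. x e - y e)" "negligible rho (\<lambda>e. z e - y e)"
  then show "negligible rho (\<lambda>e. z e - x e)" using negligible_diff by fastforce
qed

lemma gclass_self: "moderate rho x \<Longrightarrow> x \<in> gclass rho x"
  unfolding gclass_def by (simp add: negligible_zero)

lemma gclass_memD: "y \<in> gclass rho x \<Longrightarrow> moderate rho y \<and> negligible rho (\<lambda>e. y e - x e)"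
  unfolding gclass_def by simp

lemma moderate_of_mem_gclass: "y \<in> gclass rho x \<Longrightarrow> moderate rho x"
proof -
  assume "y \<in> gclass rho x"
  then have "moderate rho (\<lambda>e. y e - (y e - x e))"
    using gclass_memD moderate_diff negligible_imp_moderate by blast
  then show ?thesis by simp
qed

lemma gclass_eq_of_mem: "y \<in> gclass rho x \<Longrightarrow> gclass rho y = gclass rho x"
  using gclass_eqI gclass_memD by blast

lemma gclass_eqD: "gclass rho x = gclass rho y \<Longrightarrow> moderate rho x \<Longrightarrow> negligible rho (\<lambda>e. x e - y e)"
  using gclass_self[of x] gclass_memD by auto

lemma gclass_in_Ctil: "moderate rho x \<Longrightarrow> gclass rho x \<in> Ctil rho"
  unfolding Ctil_def by blast

lemma moderate_of_gclass_in_Ctil: "gclass rho x \<in> Ctil rho \<Longrightarrow> moderate rho x"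
  unfolding Ctil_def using gclass_self moderate_of_mem_gclass by fastforce

lemma Ctil_eq_gclass: "X \<in> Ctil rho \<Longrightarrow> x \<in> X \<Longrightarrow> X = gclass rho x"
  unfolding Ctil_def using gclass_eq_of_mem by blast

lemma Ctil_moderate: "X \<in> Ctil rho \<Longrightarrow> x \<in> X \<Longrightarrow> moderate rho x"
  unfolding Ctil_def using gclass_memD by blast

lemma Ctil_rep:
  assumes "X \<in> Ctil rho"
  shows "moderate rho (rep rho X)" "X = gclass rho (rep rho X)"
proof -
  have "\<exists>x. moderate rho x \<and> X = gclass rho x" using assms unfolding Ctil_def by auto
  then have "moderate rho (rep rho X) \<and> X = gclass rho (rep rho X)"
    unfolding rep_def by (rule someI_ex)
  then show "moderate rho (rep rho X)" "X = gclass rho (rep rho X)" by auto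
qed

lemma rep_in: "X \<in> Ctil rho \<Longrightarrow> rep rho X \<in> X"
  using Ctil_rep gclass_self by metis

lemma gabs_gdiff_gclass:
  assumes "moderate rho x" "moderate rho y"
  shows "gabs rho (gdiff rho (gclass rho x) (gclass rho y)) =
    gclass rho (\<lambda>e. complex_of_real (cmod (x e - y e)))"
proof -
  define x0 where "x0 = rep rho (gclass rho x)"
  define y0 where "y0 = rep rho (gclass rho y)"
  have x0: "moderate rho x0" "negligible rho (\<lambda>e. x0 e - x e)"
    using rep_in[OF gclass_in_Ctil[OF assms(1)]] gclass_memD unfolding x0_def by auto
  have y0: "moderate rho y0" "negligible rho (\<lambda>e. y0 e - y e)"
    using rep_in[OF gclass_in_Ctil[OF assms(2)]] gclass_memD unfolding y0_def by auto
  define d0 where "d0 = rep rho (gclass rho (\<lambda>e. x0 e - y0 e))"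
  have "negligible rho (\<lambda>e. d0 e - (x0 e - y0 e))"
    using rep_in[OF gclass_in_Ctil[OF moderate_diff[OF x0(1) y0(1)]]] gclass_memD
    unfolding d0_def by auto
  then have "negligible rho (\<lambda>e. (d0 e - (x0 e - y0 e)) + (x0 e - x e) - (y0 e - y e))"
    using negligible_add[OF _ x0(2)] negligible_diff[OF _ y0(2)] by blast
  then have "negligible rho (\<lambda>e. complex_of_real (cmod (d0 e)) - complex_of_real (cmod (x e - y e)))"
  proof (rule negligible_dominated[of _ _ 1], intro always_eventually allI)
    fix e
    have "cmod (complex_of_real (cmod (d0 e)) - complex_of_real (cmod (x e - y e)))
        = \<bar>cmod (d0 e) - cmod (x e - y e)\<bar>" by (metis norm_of_real of_real_diff)
    also have "\<dots> \<le> cmod (d0 e - (x e - y e))" by (rule norm_triangle_ineq3)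
    finally show "cmod (complex_of_real (cmod (d0 e)) - complex_of_real (cmod (x e - y e)))
        \<le> 1 * cmod (d0 e - (x0 e - y0 e) + (x0 e - x e) - (y0 e - y e))"
      by (simp add: algebra_simps)
  qed
  then have "gclass rho (\<lambda>e. complex_of_real (cmod (d0 e))) =
      gclass rho (\<lambda>e. complex_of_real (cmod (x e - y e)))"
    by (rule gclass_eqI)
  then show ?thesis unfolding gabs_def gdiff_def d0_def x0_def y0_def by simp
qed

lemma real_net_of_real: "real_net (\<lambda>e. complex_of_real (f e))"
  unfolding real_net_def by simp

lemma gltI:
  assumes "moderate rho x" "real_net x" "moderate rho y" "real_net y"
    "\<forall>\<^sub>F e in at_right 0. Re (y e) - Re (x e) > rho e ^ m"
  shows "glt rho (gclass rho x) (gclass rho y)"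
  unfolding glt_def using assms by (intro exI[of _ x] exI[of _ y]) auto

lemma glt_gap:
  assumes "glt rho X Y" "x \<in> X" "y \<in> Y"
  shows "\<exists>m. \<forall>\<^sub>F e in at_right 0. Re (y e) - Re (x e) > rho e ^ m"
proof -
  obtain x1 y1 m where 1: "X = gclass rho x1" "Y = gclass rho y1"
    "\<forall>\<^sub>F e in at_right 0. Re (y1 e) - Re (x1 e) > rho e ^ m"
    using assms(1) unfolding glt_def by blast
  have nx: "negligible rho (\<lambda>e. x e - x1 e)" "negligible rho (\<lambda>e. y e - y1 e)"
    using assms(2,3) 1 gclass_memD by auto
  have "\<forall>\<^sub>F e in at_right 0. Re (y e) - Re (x e) > rho e ^ (m+1)"
    using 1(3) negligibleD[OF nx(1), of "m+2"] negligibleD[OF nx(2), of "m+2"]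
      eventually_rho_le_quarter
  proof eventually_elim
    case (elim e)
    have "\<bar>Re (x e) - Re (x1 e)\<bar> \<le> rho e ^ (m+2)" "\<bar>Re (y e) - Re (y1 e)\<bar> \<le> rho e ^ (m+2)"
      using elim abs_Re_le_cmod[of "x e - x1 e"] abs_Re_le_cmod[of "y e - y1 e"] by auto
    then show ?case using elim power_gap_quarter[of "rho e" m] by linarith
  qed
  then show ?thesis by blast
qed

lemma mem_sharp_ball_drho_iff:
  assumes "z \<in> Ctil rho" "z' \<in> z" "w \<in> Ctil rho" "w' \<in> w"
  shows "w \<in> sharp_ball rho z (drho_pow rho p) \<longleftrightarrow>
    (\<exists>m. \<forall>\<^sub>F e in at_right 0. rho e ^ p - cmod (w' e - z' e) > rho e ^ m)"
proof -
  have m: "moderate rho z'" "moderate rho w'" using assms Ctil_moderate by auto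
  have "gabs rho (gdiff rho w z) = gclass rho (\<lambda>e. complex_of_real (cmod (w' e - z' e)))"
    using gabs_gdiff_gclass[OF m(2) m(1)] assms Ctil_eq_gclass by simp
  then have iff: "w \<in> sharp_ball rho z (drho_pow rho p) \<longleftrightarrow>
      glt rho (gclass rho (\<lambda>e. complex_of_real (cmod (w' e - z' e))))
        (gclass rho (\<lambda>e. complex_of_real (rho e ^ p)))"
    unfolding sharp_ball_def drho_pow_def using assms by simp
  have mn: "moderate rho (\<lambda>e. complex_of_real (cmod (w' e - z' e)))"
    by (intro moderate_norm moderate_diff m)
  show ?thesis
  proof
    assume "w \<in> sharp_ball rho z (drho_pow rho p)"
    from glt_gap[OF this[unfolded iff] gclass_self[OF mn] gclass_self[OF moderate_rho_power]]
    show "\<exists>m. \<forall>\<^sub>F e in at_right 0. rho e ^ p - cmod (w' e - z' e) > rho e ^ m"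
      by simp
  next
    assume "\<exists>m. \<forall>\<^sub>F e in at_right 0. rho e ^ p - cmod (w' e - z' e) > rho e ^ m"
    then obtain m where "\<forall>\<^sub>F e in at_right 0. rho e ^ p - cmod (w' e - z' e) > rho e ^ m" ..
    then show "w \<in> sharp_ball rho z (drho_pow rho p)"
      unfolding iff
      by (intro gltI[where m = m])
        (auto simp del: of_real_power simp: real_net_of_real moderate_rho_power mn)
  qed
qed

lemma sharp_ball_subset_Ctil: "sharp_ball rho z r \<subseteq> Ctil rho"
  unfolding sharp_ball_def by auto

lemma sharp_ball_drho_antimono:
  assumes "z \<in> Ctil rho" "p \<le> p'"
  shows "sharp_ball rho z (drho_pow rho p') \<subseteq> sharp_ball rho z (drho_pow rho p)"
proof
  fix w assume w: "w \<in> sharp_ball rho z (drho_pow rho p')"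
  have wC: "w \<in> Ctil rho" using w sharp_ball_subset_Ctil by auto
  note iff = mem_sharp_ball_drho_iff[OF assms(1) rep_in[OF assms(1)] wC rep_in[OF wC]]
  obtain m where m: "\<forall>\<^sub>F e in at_right 0. rho e ^ p' - cmod (rep rho w e - rep rho z e) > rho e ^ m"
    using w iff by blast
  have "\<forall>\<^sub>F e in at_right 0. rho e ^ p - cmod (rep rho w e - rep rho z e) > rho e ^ m"
    using m eventually_rho_in_unit
  proof eventually_elim
    case (elim e)
    have "rho e ^ p' \<le> rho e ^ p" using elim assms(2) by (intro power_decreasing) auto
    then show ?case using elim by linarith
  qed
  then show "w \<in> sharp_ball rho z (drho_pow rho p)" using iff by blast
qed

lemma sharp_ball_contains_drho_ball:
  assumes c: "c \<in> Ctil rho" and r: "r \<in> Rtil rho" and z: "z \<in> sharp_ball rho c r"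
  shows "\<exists>p. sharp_ball rho z (drho_pow rho p) \<subseteq> sharp_ball rho c r"
proof -
  have zC: "z \<in> Ctil rho" using z sharp_ball_subset_Ctil by auto
  define z0 where "z0 = rep rho z"
  define c0 where "c0 = rep rho c"
  have z0: "moderate rho z0" "z = gclass rho z0" using Ctil_rep[OF zC] z0_def by auto
  have c0: "moderate rho c0" "c = gclass rho c0" using Ctil_rep[OF c] c0_def by auto
  obtain r1 where r1: "moderate rho r1" "real_net r1" "r = gclass rho r1"
    using r unfolding Rtil_def by auto
  have "glt rho (gabs rho (gdiff rho z c)) r" using z unfolding sharp_ball_def by auto
  then have "glt rho (gclass rho (\<lambda>e. complex_of_real (cmod (z0 e - c0 e)))) (gclass rho r1)"
    using gabs_gdiff_gclass[OF z0(1) c0(1)] z0 c0 r1 by simp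
  from glt_gap[OF this gclass_self[OF moderate_norm[OF moderate_diff[OF z0(1) c0(1)]]]
      gclass_self[OF r1(1)]]
  obtain m where m: "\<forall>\<^sub>F e in at_right 0. Re (r1 e) - cmod (z0 e - c0 e) > rho e ^ m"
    by auto
  have "sharp_ball rho z (drho_pow rho (m+1)) \<subseteq> sharp_ball rho c r"
  proof
    fix w assume w: "w \<in> sharp_ball rho z (drho_pow rho (m+1))"
    have wC: "w \<in> Ctil rho" using w sharp_ball_subset_Ctil by auto
    define w0 where "w0 = rep rho w"
    have w0: "moderate rho w0" "w = gclass rho w0" using Ctil_rep[OF wC] w0_def by auto
    obtain m' where m': "\<forall>\<^sub>F e in at_right 0. rho e ^ (m+1) - cmod (w0 e - z0 e) > rho e ^ m'"
      using w mem_sharp_ball_drho_iff[OF zC rep_in[OF zC] wC rep_in[OF wC]]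
      unfolding w0_def z0_def by blast
    have "\<forall>\<^sub>F e in at_right 0. Re (r1 e) - cmod (w0 e - c0 e) > rho e ^ (m+2)"
      using m m' eventually_rho_le_quarter
    proof eventually_elim
      case (elim e)
      have "cmod (w0 e - c0 e) \<le> cmod (w0 e - z0 e) + cmod (z0 e - c0 e)"
        using norm_triangle_ineq[of "w0 e - z0 e" "z0 e - c0 e"] by simp
      moreover have "rho e ^ m' > 0" "rho e ^ (m+2) > 0" using elim by simp_all
      ultimately show ?case using elim power_gap_quarter[of "rho e" m] by linarith
    qed
    then have "glt rho (gclass rho (\<lambda>e. complex_of_real (cmod (w0 e - c0 e)))) (gclass rho r1)"
      by (intro gltI[where m = "m+2"] moderate_norm moderate_diff w0(1) c0(1) real_net_of_real r1)
        simp
    then have "glt rho (gabs rho (gdiff rho w c)) r"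
      using gabs_gdiff_gclass[OF w0(1) c0(1)] w0 c0 r1 by simp
    then show "w \<in> sharp_ball rho c r" unfolding sharp_ball_def using wC by simp
  qed
  then show ?thesis by blast
qed

lemma gclass_in_sharp_ball_drho:
  assumes zC: "z \<in> Ctil rho" and z': "z' \<in> z"
    and close: "\<forall>\<^sub>F e in at_right 0. cmod (w e - z' e) \<le> rho e ^ (p+1)"
  shows "gclass rho w \<in> sharp_ball rho z (drho_pow rho p)"
proof -
  have "moderate rho (\<lambda>e. w e - z' e)"
  proof (rule moderateI[of _ 1 0])
    show "\<forall>\<^sub>F e in at_right 0. cmod (w e - z' e) \<le> 1 * inverse (rho e ^ 0)"
      using close eventually_rho_in_unit
    proof eventually_elim
      case (elim e)
      then have "rho e ^ (p+1) \<le> 1" by (intro power_le_one) auto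
      then show ?case using elim by simp
    qed
  qed
  from moderate_add[OF Ctil_moderate[OF zC z'] this]
  have mw: "moderate rho w" by simp
  show ?thesis
    unfolding mem_sharp_ball_drho_iff[OF zC z' gclass_in_Ctil[OF mw] gclass_self[OF mw]]
  proof (intro exI[of _ "p+2"])
    show "\<forall>\<^sub>F e in at_right 0. rho e ^ p - cmod (w e - z' e) > rho e ^ (p+2)"
      using close eventually_rho_le_quarter
    proof eventually_elim
      case (elim e)
      then have "rho e ^ (p+1) + 2 * rho e ^ (p+2) < rho e ^ p"
        by (intro power_gap_quarter) auto
      moreover have "0 < rho e ^ (p+2)" using elim by simp
      ultimately show ?case using elim by linarith
    qed
  qed
qed

lemma generated_open_contains_drho_ball:
  assumes "generate_topology_on
     {sharp_ball rho c r | c r. c \<in> Ctil rho \<and> r \<in> Rtil rho \<and> glt rho (gclass rho (\<lambda>e. 0)) r} W"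
  shows "\<forall>z\<in>W. z \<in> Ctil rho \<longrightarrow> (\<exists>p. sharp_ball rho z (drho_pow rho p) \<subseteq> W)"
  using assms
proof induction
  case Empty
  then show ?case by simp
next
  case (Int a b)
  show ?case
  proof (intro ballI impI)
    fix z assume z: "z \<in> a \<inter> b" "z \<in> Ctil rho"
    obtain p1 where "sharp_ball rho z (drho_pow rho p1) \<subseteq> a" using Int z by blast
    moreover obtain p2 where "sharp_ball rho z (drho_pow rho p2) \<subseteq> b" using Int z by blast
    ultimately have "sharp_ball rho z (drho_pow rho (max p1 p2)) \<subseteq> a \<inter> b"
      using sharp_ball_drho_antimono[OF z(2), of p1 "max p1 p2"]
        sharp_ball_drho_antimono[OF z(2), of p2 "max p1 p2"] by auto
    then show "\<exists>p. sharp_ball rho z (drho_pow rho p) \<subseteq> a \<inter> b" by blast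
  qed
next
  case (UN K)
  then show ?case by blast
next
  case (Basis s)
  then show ?case using sharp_ball_contains_drho_ball by blast
qed

lemma sharp_interior_contains_drho_ball:
  assumes "z \<in> (sharp_topology rho) interior_of S" "z \<in> Ctil rho"
  shows "\<exists>p. sharp_ball rho z (drho_pow rho p) \<subseteq> S"
proof -
  obtain W where W: "openin (sharp_topology rho) W" "z \<in> W" "W \<subseteq> S"
    using assms(1) unfolding interior_of_def by blast
  have "generate_topology_on
     {sharp_ball rho c r | c r. c \<in> Ctil rho \<and> r \<in> Rtil rho \<and> glt rho (gclass rho (\<lambda>e. 0)) r} W"
    using W(1) unfolding sharp_topology_def by (rule openin_topology_generated_by)
  from generated_open_contains_drho_ball[OF this] W assms(2) show ?thesis by blast
qed

section \<open>Hypernatural numbers and hyperlimits\<close>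

lemma Ntil_ni:
  assumes "N \<in> Ntil rho"
  shows "N = gclass rho (\<lambda>e. of_nat (ni rho N e))" "moderate rho (\<lambda>e. of_nat (ni rho N e))"
proof -
  have "\<exists>n. N = gclass rho (\<lambda>e. of_nat (n e))" using assms unfolding Ntil_def by auto
  then show eq: "N = gclass rho (\<lambda>e. of_nat (ni rho N e))"
    unfolding ni_def by (rule someI_ex)
  obtain x where "moderate rho x" "N = gclass rho x"
    using assms unfolding Ntil_def Rtil_def by auto
  then have "x \<in> gclass rho (\<lambda>e. of_nat (ni rho N e))" using gclass_self eq by simp
  then show "moderate rho (\<lambda>e. of_nat (ni rho N e))" by (rule moderate_of_mem_gclass)
qed

lemma gclass_nat_in_Ntil:
  assumes "moderate rho (\<lambda>e. of_nat (n e))"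
  shows "gclass rho (\<lambda>e. of_nat (n e)) \<in> Ntil rho"
proof -
  have "gclass rho (\<lambda>e. of_nat (n e)) \<in> Rtil rho"
    unfolding Rtil_def using assms by (auto simp: real_net_def)
  then show ?thesis unfolding Ntil_def by auto
qed

lemma ni_eventually_eq:
  assumes "N \<in> Ntil rho" "N = gclass rho (\<lambda>e. of_nat (n e))"
  shows "\<forall>\<^sub>F e in at_right 0. ni rho N e = n e"
proof -
  have "gclass rho (\<lambda>e. of_nat (ni rho N e)) = gclass rho (\<lambda>e. of_nat (n e))"
    using Ntil_ni(1)[OF assms(1)] assms(2) by simp
  from gclass_eqD[OF this Ntil_ni(2)[OF assms(1)]]
  have "negligible rho (\<lambda>e. (of_nat (ni rho N e) :: complex) - of_nat (n e))" .
  from negligibleD[OF this, of 1] eventually_rho_le_quarter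
  show ?thesis
  proof eventually_elim
    case (elim e)
    have "(of_nat (ni rho N e) :: complex) - of_nat (n e) = of_real (real (ni rho N e) - real (n e))"
      by simp
    then have "\<bar>real (ni rho N e) - real (n e)\<bar> < 1"
      using elim by (simp only: norm_of_real) simp
    then show ?case by linarith
  qed
qed

lemma gzero_in_Ntil: "gzero rho \<in> Ntil rho"
  using gclass_nat_in_Ntil[of "\<lambda>e. 0"] moderate_const unfolding gzero_def by simp

lemma eventually_ni_gzero: "\<forall>\<^sub>F e in at_right 0. ni rho (gzero rho) e = 0"
  using ni_eventually_eq[OF gzero_in_Ntil, of "\<lambda>e. 0"] unfolding gzero_def by simp

lemma gle_natI:
  assumes "moderate rho (\<lambda>e. of_nat (n e))" "moderate rho (\<lambda>e. of_nat (m e))"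
    "\<forall>\<^sub>F e in at_right 0. n e \<le> m e"
  shows "gle rho (gclass rho (\<lambda>e. of_nat (n e))) (gclass rho (\<lambda>e. of_nat (m e)))"
  unfolding gle_def
  using assms
  by (intro exI[of _ "\<lambda>e. of_nat (n e)"] exI[of _ "\<lambda>e. of_nat (m e)"] exI[of _ "\<lambda>e. 0"])
    (auto simp: real_net_def negligible_zero elim: eventually_mono)

lemma moderate_max_nat:
  assumes "moderate rho (\<lambda>e. of_nat (n e))" "moderate rho (\<lambda>e. of_nat (m e))"
  shows "moderate rho (\<lambda>e. of_nat (max (n e) (m e)))"
proof (rule moderate_dominated[OF moderate_add[OF assms], of _ 1], intro always_eventually allI)
  fix e
  show "cmod (of_nat (max (n e) (m e)) :: complex) \<le> 1 * cmod (of_nat (n e) + of_nat (m e) :: complex)"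
    by (simp flip: of_nat_add add: norm_of_nat max_def)
qed

lemma hyperlim_eventually_close:
  assumes "hyperlim rho A l" "\<And>n. n \<in> Ntil rho \<Longrightarrow> A n \<in> Ctil rho"
  shows "\<exists>M\<in>Ntil rho. \<forall>n\<in>Ntil rho. gle rho M n \<longrightarrow>
    (\<forall>\<^sub>F e in at_right 0. cmod (rep rho (A n) e - rep rho l e) < rho e ^ q)"
proof -
  have lC: "l \<in> Ctil rho" using assms(1) unfolding hyperlim_def by auto
  obtain M where M: "M \<in> Ntil rho" "\<forall>n\<in>Ntil rho. gle rho M n \<longrightarrow>
      glt rho (gabs rho (gdiff rho (A n) l)) (drho_pow rho q)"
    using assms(1) unfolding hyperlim_def by blast
  show ?thesis
  proof (intro bexI[OF _ M(1)] ballI impI)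
    fix n assume n: "n \<in> Ntil rho" "gle rho M n"
    define a0 where "a0 = rep rho (A n)"
    define l0 where "l0 = rep rho l"
    have a0: "moderate rho a0" "A n = gclass rho a0" using Ctil_rep assms(2)[OF n(1)] a0_def by auto
    have l0: "moderate rho l0" "l = gclass rho l0" using Ctil_rep[OF lC] l0_def by auto
    have "glt rho (gabs rho (gdiff rho (A n) l)) (drho_pow rho q)" using M n by blast
    then have "glt rho (gclass rho (\<lambda>e. complex_of_real (cmod (a0 e - l0 e))))
        (gclass rho (\<lambda>e. complex_of_real (rho e ^ q)))"
      unfolding a0(2) l0(2) gabs_gdiff_gclass[OF a0(1) l0(1)] drho_pow_def .
    from glt_gap[OF this gclass_self[OF moderate_norm[OF moderate_diff[OF a0(1) l0(1)]]]
        gclass_self[OF moderate_rho_power]]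
    obtain m where "\<forall>\<^sub>F e in at_right 0. rho e ^ q - cmod (a0 e - l0 e) > rho e ^ m" by auto
    then show "\<forall>\<^sub>F e in at_right 0. cmod (rep rho (A n) e - rep rho l e) < rho e ^ q"
      using eventually_rho_in_unit unfolding a0_def l0_def
      by eventually_elim (smt (verit) zero_less_power)
  qed
qed

lemma hyperlim_unique:
  assumes "hyperlim rho A l1" "hyperlim rho A l2" "\<And>n. n \<in> Ntil rho \<Longrightarrow> A n \<in> Ctil rho"
  shows "l1 = l2"
proof -
  have "negligible rho (\<lambda>e. rep rho l1 e - rep rho l2 e)"
  proof (rule negligibleI[of _ 2])
    fix q
    obtain M1 where M1: "M1 \<in> Ntil rho" "\<forall>n\<in>Ntil rho. gle rho M1 n \<longrightarrow>
        (\<forall>\<^sub>F e in at_right 0. cmod (rep rho (A n) e - rep rho l1 e) < rho e ^ q)"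
      using hyperlim_eventually_close[OF assms(1,3)] by blast
    obtain M2 where M2: "M2 \<in> Ntil rho" "\<forall>n\<in>Ntil rho. gle rho M2 n \<longrightarrow>
        (\<forall>\<^sub>F e in at_right 0. cmod (rep rho (A n) e - rep rho l2 e) < rho e ^ q)"
      using hyperlim_eventually_close[OF assms(2,3)] by blast
    define k where "k = (\<lambda>e. max (ni rho M1 e) (ni rho M2 e))"
    note m1 = Ntil_ni[OF M1(1)] and m2 = Ntil_ni[OF M2(1)]
    have mk: "moderate rho (\<lambda>e. of_nat (k e))"
      unfolding k_def by (rule moderate_max_nat[OF m1(2) m2(2)])
    define n where "n = gclass rho (\<lambda>e. of_nat (k e))"
    have nN: "n \<in> Ntil rho" unfolding n_def by (rule gclass_nat_in_Ntil[OF mk])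
    have "gle rho M1 n"
      unfolding n_def by (subst m1(1), rule gle_natI[OF m1(2) mk]) (simp add: k_def)
    moreover have "gle rho M2 n"
      unfolding n_def by (subst m2(1), rule gle_natI[OF m2(2) mk]) (simp add: k_def)
    ultimately have
      "\<forall>\<^sub>F e in at_right 0. cmod (rep rho (A n) e - rep rho l1 e) < rho e ^ q"
      "\<forall>\<^sub>F e in at_right 0. cmod (rep rho (A n) e - rep rho l2 e) < rho e ^ q"
      using M1(2) M2(2) nN by blast+
    then show "\<forall>\<^sub>F e in at_right 0. cmod (rep rho l1 e - rep rho l2 e) \<le> 2 * rho e ^ q"
    proof eventually_elim
      case (elim e)
      then show ?case
        using norm_triangle_ineq4[of "rep rho (A n) e - rep rho l2 e" "rep rho (A n) e - rep rho l1 e"]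
        by simp
    qed
  qed
  then have "gclass rho (rep rho l1) = gclass rho (rep rho l2)" by (rule gclass_eqI)
  then show ?thesis using Ctil_rep assms(1,2) unfolding hyperlim_def by metis
qed

lemma hyperlim_cong:
  assumes "\<And>n. n \<in> Ntil rho \<Longrightarrow> A n = B n"
  shows "hyperlim rho A l = hyperlim rho B l"
proof -
  have "glt rho (gabs rho (gdiff rho (A n) l)) (drho_pow rho q) \<longleftrightarrow>
      glt rho (gabs rho (gdiff rho (B n) l)) (drho_pow rho q)" if "n \<in> Ntil rho" for n q
    using assms that by simp
  then show ?thesis unfolding hyperlim_def by blast
qed

lemma hyperseries_eqI:
  assumes "hyperseries_converges_to rho b l"
    "\<And>N. N \<in> Ntil rho \<Longrightarrow> hypersum rho b (gzero rho) N \<in> Ctil rho"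
  shows "hyperseries rho b = l"
  unfolding hyperseries_def
proof (rule the_equality)
  show "hyperseries_converges_to rho b l" by fact
  fix l' assume "hyperseries_converges_to rho b l'"
  then show "l' = l"
    using hyperlim_unique assms unfolding hyperseries_converges_to_def by blast
qed

text \<open>The largest partial sum up to a hypernatural \<open>N\<close> is attained at some hypernatural
  \<open>K \<le> N\<close>, so it is moderate whenever all hypersums are.\<close>

lemma moderate_hypersums_partial_sums_bound:
  assumes mh: "moderate_hypersums rho b" and N: "N \<in> Ntil rho"
  obtains K where "\<forall>\<^sub>F e in at_right 0. \<forall>j\<le>ni rho N e. cmod (\<Sum>i\<le>j. b i e) \<le> inverse (rho e ^ K)"
proof -
  define B where "B j e = (\<Sum>i\<le>j. b i e)" for j e
  have "\<forall>e. \<exists>k. k \<le> ni rho N e \<and> (\<forall>j\<le>ni rho N e. cmod (B j e) \<le> cmod (B k e))"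
  proof
    fix e
    have "Max ((\<lambda>j. cmod (B j e)) ` {..ni rho N e}) \<in> (\<lambda>j. cmod (B j e)) ` {..ni rho N e}"
      by (intro Max_in) auto
    then obtain k where k: "Max ((\<lambda>j. cmod (B j e)) ` {..ni rho N e}) = cmod (B k e)"
        "k \<in> {..ni rho N e}"
      by (rule imageE)
    have "cmod (B j e) \<le> cmod (B k e)" if "j \<le> ni rho N e" for j
      unfolding k(1)[symmetric] using that by (intro Max_ge) auto
    then show "\<exists>k. k \<le> ni rho N e \<and> (\<forall>j\<le>ni rho N e. cmod (B j e) \<le> cmod (B k e))"
      using k(2) by auto
  qed
  from choice[OF this] obtain k
    where k: "\<forall>e. k e \<le> ni rho N e \<and> (\<forall>j\<le>ni rho N e. cmod (B j e) \<le> cmod (B (k e) e))"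
    by blast
  have "moderate rho (\<lambda>e. of_nat (k e))"
  proof (rule moderate_dominated[OF Ntil_ni(2)[OF N], of _ 1], intro always_eventually allI)
    fix e
    show "cmod (of_nat (k e) :: complex) \<le> 1 * cmod (of_nat (ni rho N e) :: complex)"
      using k by simp
  qed
  then have KK: "gclass rho (\<lambda>e. of_nat (k e)) \<in> Ntil rho" by (rule gclass_nat_in_Ntil)
  with mh have "moderate rho (\<lambda>e. \<Sum>n\<le>ni rho (gclass rho (\<lambda>e. of_nat (k e))) e. b n e)"
    unfolding moderate_hypersums_def by blast
  then have "moderate rho (\<lambda>e. B (k e) e)"
    by (rule moderate_eventually_eq)
      (use ni_eventually_eq[OF KK refl] in \<open>auto elim: eventually_mono simp: B_def\<close>)
  then obtain K where "\<forall>\<^sub>F e in at_right 0. cmod (B (k e) e) \<le> inverse (rho e ^ K)"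
    by (rule moderateE)
  then have "\<forall>\<^sub>F e in at_right 0. \<forall>j\<le>ni rho N e. cmod (B j e) \<le> inverse (rho e ^ K)"
    by eventually_elim (use k in \<open>blast intro: order.trans\<close>)
  then show thesis unfolding B_def by (rule that)
qed

section \<open>Changing the coefficients and the point of a power series\<close>

lemma strongly_equiv_term_bound:
  assumes "strongly_equiv rho a a'" "\<forall>\<^sub>F e in at_right 0. cmod (u e) \<le> inverse (rho e ^ K)"
  shows "\<forall>\<^sub>F e in at_right 0. \<forall>n. cmod ((a n e - a' n e) * u e ^ n) \<le> rho e ^ r * (1/2) ^ n"
proof -
  have "\<forall>\<^sub>F e in at_right 0. \<forall>n. cmod (a n e - a' n e) \<le> rho e ^ (n * (K + 1) + r)"
    using assms(1) unfolding strongly_equiv_def by blast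
  then show ?thesis using assms(2) eventually_rho_le_quarter
  proof eventually_elim
    case (elim e)
    show ?case
    proof
      fix n
      have "rho e ^ (n * (K + 1) + r) = (rho e ^ K) ^ n * (rho e ^ r * rho e ^ n)"
        by (simp add: power_add power_mult[symmetric] algebra_simps)
      then have eq: "rho e ^ (n * (K + 1) + r) * inverse (rho e ^ K) ^ n = rho e ^ r * rho e ^ n"
        using elim by (simp add: power_inverse field_simps)
      have "cmod ((a n e - a' n e) * u e ^ n) \<le> rho e ^ (n * (K + 1) + r) * inverse (rho e ^ K) ^ n"
        unfolding norm_mult norm_power using elim by (intro mult_mono power_mono) auto
      also have "\<dots> \<le> rho e ^ r * (1/2) ^ n"
        unfolding eq using elim by (intro mult_left_mono power_mono) auto
      finally show "cmod ((a n e - a' n e) * u e ^ n) \<le> rho e ^ r * (1/2) ^ n" .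
    qed
  qed
qed

lemma negligible_powser_coeff_diff:
  assumes "strongly_equiv rho a a'" "moderate rho u"
  shows "negligible rho (\<lambda>e. \<Sum>n\<le>N e. (a n e - a' n e) * u e ^ n)"
    and "negligible rho (\<lambda>e. \<Sum>n. (a n e - a' n e) * u e ^ n)"
proof -
  obtain K where K: "\<forall>\<^sub>F e in at_right 0. cmod (u e) \<le> inverse (rho e ^ K)"
    using assms(2) by (rule moderateE)
  note bound = strongly_equiv_term_bound[OF assms(1) K]
  show "negligible rho (\<lambda>e. \<Sum>n\<le>N e. (a n e - a' n e) * u e ^ n)"
    by (rule negligibleI[of _ 2], use bound in eventually_elim) (rule geometric_half_bound(2), auto)
  show "negligible rho (\<lambda>e. \<Sum>n. (a n e - a' n e) * u e ^ n)"
    by (rule negligibleI[of _ 2], use bound in eventually_elim) (rule geometric_half_bound(1), auto)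
qed

lemma eventually_conv_radius_coeff_diff:
  assumes "strongly_equiv rho a a'" "moderate rho u"
  shows "\<forall>\<^sub>F e in at_right 0. ereal (cmod (u e) + 1) \<le> conv_radius (\<lambda>n. a' n e - a n e)"
proof -
  obtain K where K: "\<forall>\<^sub>F e in at_right 0. cmod (u e) \<le> inverse (rho e ^ K)"
    using assms(2) by (rule moderateE)
  define X where "X = (\<lambda>e. complex_of_real (inverse (rho e ^ (K + 1))))"
  have X: "\<forall>\<^sub>F e in at_right 0. cmod (X e) = inverse (rho e ^ (K + 1))"
    using eventually_rho_in_unit by eventually_elim (simp only: X_def norm_of_real, simp)
  then have "\<forall>\<^sub>F e in at_right 0. cmod (X e) \<le> inverse (rho e ^ (K + 1))"
    by (auto elim: eventually_mono)
  from strongly_equiv_term_bound[OF assms(1) this, of 0]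
  show ?thesis using K X eventually_rho_le_quarter
  proof eventually_elim
    case (elim e)
    have "summable (\<lambda>n. (a' n e - a n e) * X e ^ n)"
      by (rule summable_comparison_test[OF _ summable_geometric[of "1/2"]])
        (use elim(1) in \<open>auto simp: norm_mult norm_minus_commute\<close>)
    then have "ereal (cmod (X e)) \<le> conv_radius (\<lambda>n. a' n e - a n e)"
      by (rule conv_radius_geI)
    have iK: "1 \<le> inverse (rho e ^ K)" using elim by (simp add: one_le_inverse power_le_one)
    moreover have "4 \<le> inverse (rho e)" using elim by (simp add: field_simps)
    ultimately have "inverse (rho e ^ K) * 4 \<le> inverse (rho e ^ K) * inverse (rho e)"
      by (intro mult_left_mono) (use elim in auto)
    then have "cmod (u e) + 1 \<le> inverse (rho e ^ K) * inverse (rho e)" using iK elim by linarith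
    also have "\<dots> = cmod (X e)" using elim by (simp add: mult.commute)
    finally have "cmod (u e) + 1 \<le> cmod (X e)" .
    then have "ereal (cmod (u e) + 1) \<le> ereal (cmod (X e))" by simp
    then show ?case using \<open>ereal (cmod (X e)) \<le> conv_radius _\<close> by (rule order.trans)
  qed
qed

lemma negligible_partial_powser_point_diff:
  assumes wm: "weakly_moderate rho b"
    and mh: "moderate_hypersums rho (\<lambda>n e. b n e * u0 e ^ n)"
    and nd: "negligible rho (\<lambda>e. u1 e - u0 e)"
    and N: "N \<in> Ntil rho"
  shows "negligible rho (\<lambda>e. \<Sum>n\<le>ni rho N e. b n e * u1 e ^ n - b n e * u0 e ^ n)"
proof -
  obtain Q R where QR: "\<forall>\<^sub>F e in at_right 0. \<forall>n. cmod (b n e) \<le> inverse (rho e ^ (n * Q + R))"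
    using wm unfolding weakly_moderate_def by blast
  obtain P where P: "\<forall>\<^sub>F e in at_right 0. cmod (of_nat (ni rho N e) :: complex) \<le> inverse (rho e ^ P)"
    using Ntil_ni(2)[OF N] by (rule moderateE)
  obtain K where K: "\<forall>\<^sub>F e in at_right 0.
      \<forall>j\<le>ni rho N e. cmod (\<Sum>i\<le>j. b i e * u0 e ^ i) \<le> inverse (rho e ^ K)"
    using mh N by (rule moderate_hypersums_partial_sums_bound)
  show ?thesis
  proof (rule negligible_dominated[of _ _ 6])
    show "negligible rho (\<lambda>e. complex_of_real (inverse (rho e ^ (K + P + Q + 1 + R))) * (u1 e - u0 e))"
      by (rule negligible_mult[OF moderate_inverse_rho_power nd])
    show "\<forall>\<^sub>F e in at_right 0. cmod (\<Sum>n\<le>ni rho N e. b n e * u1 e ^ n - b n e * u0 e ^ n)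
        \<le> 6 * cmod (complex_of_real (inverse (rho e ^ (K + P + Q + 1 + R))) * (u1 e - u0 e))"
      using QR P K negligibleD[OF nd, of "P + Q + 1"] eventually_rho_le_quarter
    proof eventually_elim
      case (elim e)
      then have "cmod (\<Sum>n\<le>ni rho N e. b n e * u1 e ^ n - b n e * u0 e ^ n)
          \<le> 6 * inverse (rho e ^ (K + P + Q + 1 + R)) * cmod (u1 e - u0 e)"
        by (intro norm_partial_powser_diff_le) (auto simp: norm_of_nat)
      moreover have "cmod (complex_of_real (inverse (rho e ^ (K + P + Q + 1 + R))) * (u1 e - u0 e))
          = inverse (rho e ^ (K + P + Q + 1 + R)) * cmod (u1 e - u0 e)"
        using elim by (simp only: norm_mult norm_of_real) simp
      ultimately show ?case by (simp only: mult.assoc)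
    qed
  qed
qed

lemma negligible_powser_point_diff:
  assumes mu0: "moderate rho u0"
    and nd: "negligible rho (\<lambda>e. u e - u0 e)"
    and seg: "\<forall>\<^sub>F e in at_right 0. closed_segment (u0 e) (u e) \<subseteq> eball 0 (conv_radius (\<lambda>n. b n e))"
    and diffs_moderate: "\<And>x. moderate rho x \<Longrightarrow> negligible rho (\<lambda>e. x e - u0 e) \<Longrightarrow>
      moderate rho (\<lambda>e. \<Sum>n. diffs (\<lambda>n. b n e) n * x e ^ n)"
  shows "negligible rho (\<lambda>e. (\<Sum>n. b n e * u e ^ n) - (\<Sum>n. b n e * u0 e ^ n))"
proof -
  define D where "D = (\<lambda>e x. \<Sum>n. diffs (\<lambda>n. b n e) n * x ^ n)"
  define good where "good e \<longleftrightarrow> closed_segment (u0 e) (u e) \<subseteq> eball 0 (conv_radius (\<lambda>n. b n e))" for e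
  have "\<forall>e. \<exists>x. x \<in> closed_segment (u0 e) (u e) \<and> (good e \<longrightarrow>
      cmod ((\<Sum>n. b n e * u e ^ n) - (\<Sum>n. b n e * u0 e ^ n)) \<le> cmod (D e x) * cmod (u e - u0 e))"
  proof
    fix e
    show "\<exists>x. x \<in> closed_segment (u0 e) (u e) \<and> (good e \<longrightarrow>
      cmod ((\<Sum>n. b n e * u e ^ n) - (\<Sum>n. b n e * u0 e ^ n)) \<le> cmod (D e x) * cmod (u e - u0 e))"
    proof (cases "good e")
      case True
      then obtain x where "x \<in> closed_segment (u0 e) (u e)"
        "cmod ((\<Sum>n. b n e * u e ^ n) - (\<Sum>n. b n e * u0 e ^ n)) \<le> cmod (D e x) * cmod (u e - u0 e)"
        unfolding good_def D_def by (rule powser_mean_value_bound)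
      then show ?thesis by blast
    qed auto
  qed
  from choice[OF this] obtain x where "\<forall>e. x e \<in> closed_segment (u0 e) (u e) \<and> (good e \<longrightarrow>
      cmod ((\<Sum>n. b n e * u e ^ n) - (\<Sum>n. b n e * u0 e ^ n)) \<le> cmod (D e (x e)) * cmod (u e - u0 e))"
    by blast
  then have x: "\<And>e. x e \<in> closed_segment (u0 e) (u e)"
    "\<And>e. good e \<Longrightarrow>
      cmod ((\<Sum>n. b n e * u e ^ n) - (\<Sum>n. b n e * u0 e ^ n)) \<le> cmod (D e (x e)) * cmod (u e - u0 e)"
    by auto
  have nx: "negligible rho (\<lambda>e. x e - u0 e)"
    by (rule negligible_dominated[OF nd, of _ 1], intro always_eventually allI)
      (use segment_bound1[OF x(1)] in simp)
  have "moderate rho (\<lambda>e. x e)"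
    using moderate_add[OF mu0 negligible_imp_moderate[OF nx]] by simp
  then have "negligible rho (\<lambda>e. D e (x e) * (u e - u0 e))"
    unfolding D_def by (intro negligible_mult diffs_moderate nx nd)
  moreover have "\<forall>\<^sub>F e in at_right 0. cmod ((\<Sum>n. b n e * u e ^ n) - (\<Sum>n. b n e * u0 e ^ n))
      \<le> 1 * cmod (D e (x e) * (u e - u0 e))"
    using seg by eventually_elim (simp add: x(2) good_def norm_mult)
  ultimately show ?thesis by (rule negligible_dominated)
qed

lemma eventually_segment_in_conv_radius:
  assumes se: "strongly_equiv rho a a'"
    and mu0: "moderate rho u0"
    and nd: "negligible rho (\<lambda>e. u e - u0 e)"
    and rad: "\<forall>\<^sub>F e in at_right 0. ereal (cmod (u0 e) + rho e ^ m) < conv_radius (\<lambda>n. a n e)"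
  shows "\<forall>\<^sub>F e in at_right 0. \<forall>x\<in>closed_segment (u0 e) (u e).
      ereal (cmod x) < conv_radius (\<lambda>n. a n e) \<and> ereal (cmod x) < conv_radius (\<lambda>n. a' n e)"
  using rad eventually_conv_radius_coeff_diff[OF se mu0] negligibleD[OF nd, of "m+1"]
    eventually_rho_le_quarter
proof eventually_elim
  case (elim e)
  show ?case
  proof
    fix x assume "x \<in> closed_segment (u0 e) (u e)"
    then have "cmod x \<le> cmod (u0 e) + cmod (u e - u0 e)"
      using segment_bound1 norm_triangle_ineq[of "u0 e" "x - u0 e"] by fastforce
    moreover have "rho e ^ (m+1) < rho e ^ m" using elim by (intro power_strict_decreasing) auto
    moreover have "rho e ^ m \<le> 1" using elim by (intro power_le_one) auto
    ultimately have "cmod x < cmod (u0 e) + rho e ^ m" "cmod x < cmod (u0 e) + 1"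
      using elim(3) by linarith+
    then have x: "ereal (cmod x) < ereal (cmod (u0 e) + rho e ^ m)"
        "ereal (cmod x) < ereal (cmod (u0 e) + 1)"
      by simp_all
    have a: "ereal (cmod x) < conv_radius (\<lambda>n. a n e)"
      using x(1) elim(1) by (rule order.strict_trans)
    have d: "ereal (cmod x) < conv_radius (\<lambda>n. a' n e - a n e)"
      using x(2) elim(2) by (rule order.strict_trans2)
    have "min (conv_radius (\<lambda>n. a n e)) (conv_radius (\<lambda>n. a' n e - a n e))
        \<le> conv_radius (\<lambda>n. a' n e)"
      using conv_radius_add_ge[of "\<lambda>n. a n e" "\<lambda>n. a' n e - a n e"] by simp
    moreover have "ereal (cmod x) < min (conv_radius (\<lambda>n. a n e)) (conv_radius (\<lambda>n. a' n e - a n e))"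
      using a d by simp
    ultimately have "ereal (cmod x) < conv_radius (\<lambda>n. a' n e)"
      by (rule order.strict_trans2[rotated])
    with a show "ereal (cmod x) < conv_radius (\<lambda>n. a n e) \<and> ereal (cmod x) < conv_radius (\<lambda>n. a' n e)"
      by simp
  qed
qed

lemma negligible_powser_change:
  assumes se: "strongly_equiv rho a a'"
    and mu0: "moderate rho u0"
    and nd: "negligible rho (\<lambda>e. u e - u0 e)"
    and rad: "\<forall>\<^sub>F e in at_right 0. ereal (cmod (u0 e) + rho e ^ m) < conv_radius (\<lambda>n. a n e)"
    and diffs_moderate: "\<And>x. moderate rho x \<Longrightarrow> negligible rho (\<lambda>e. x e - u0 e) \<Longrightarrow>
      moderate rho (\<lambda>e. \<Sum>n. diffs (\<lambda>n. a' n e) n * x e ^ n)"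
  shows "negligible rho (\<lambda>e. (\<Sum>n. a n e * u e ^ n) - (\<Sum>n. a' n e * u0 e ^ n))"
proof -
  have mu: "moderate rho u" using moderate_add[OF mu0 negligible_imp_moderate[OF nd]] by simp
  have seg: "\<forall>\<^sub>F e in at_right 0. \<forall>x\<in>closed_segment (u0 e) (u e).
      ereal (cmod x) < conv_radius (\<lambda>n. a n e) \<and> ereal (cmod x) < conv_radius (\<lambda>n. a' n e)"
    by (rule eventually_segment_in_conv_radius[OF se mu0 nd rad])
  have "negligible rho (\<lambda>e. (\<Sum>n. a' n e * u e ^ n) - (\<Sum>n. a' n e * u0 e ^ n))"
    using mu0 nd _ diffs_moderate
  proof (rule negligible_powser_point_diff)
    show "\<forall>\<^sub>F e in at_right 0. closed_segment (u0 e) (u e) \<subseteq> eball 0 (conv_radius (\<lambda>n. a' n e))"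
      using seg by eventually_elim auto
  qed
  from negligible_add[OF negligible_powser_coeff_diff(2)[OF se mu] this]
  show ?thesis
  proof (rule negligible_eventually_eq)
    show "\<forall>\<^sub>F e in at_right 0. (\<Sum>n. a n e * u e ^ n) - (\<Sum>n. a' n e * u0 e ^ n) =
        (\<Sum>n. (a n e - a' n e) * u e ^ n) + ((\<Sum>n. a' n e * u e ^ n) - (\<Sum>n. a' n e * u0 e ^ n))"
      using seg
    proof eventually_elim
      case (elim e)
      then have "summable (\<lambda>n. a n e * u e ^ n)" "summable (\<lambda>n. a' n e * u e ^ n)"
        by (auto intro: summable_in_conv_radius)
      then show ?case by (simp add: suminf_diff[symmetric] left_diff_distrib)
    qed
  qed
qed

section \<open>The set of convergence\<close>

lemma conv_setE:
  assumes "z \<in> conv_set rho a c"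
  obtains z1 m z2 c2 a2 where "z \<in> Ctil rho" "z1 \<in> z"
    "\<forall>\<^sub>F e in at_right 0. rad_net a e > ereal (cmod (z1 e - c e)) + ereal (rho e ^ m)"
    "z2 \<in> z" "c2 \<in> gclass rho c" "weakly_moderate rho a2" "strongly_equiv rho a a2"
    "moderate_hypersums rho (\<lambda>n e. a2 n e * (z2 e - c2 e) ^ n)"
    "hyperseries_converges_to rho (\<lambda>n e. a2 n e * (z2 e - c2 e) ^ n)
      (gclass rho (\<lambda>e. \<Sum>n. a2 n e * (z2 e - c2 e) ^ n))"
    "\<forall>zh\<in>z. moderate rho (\<lambda>e. \<Sum>n. of_nat (Suc n) * a2 (Suc n) e * (zh e - c2 e) ^ n)"
  using assms unfolding conv_set_def by blast

lemma conv_set_radius_margin: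
  assumes "z \<in> conv_set rho a c" "z' \<in> z" "c' \<in> gclass rho c"
  shows "\<exists>m. \<forall>\<^sub>F e in at_right 0. ereal (cmod (z' e - c' e) + rho e ^ m) < conv_radius (\<lambda>n. a n e)"
proof -
  obtain z1 m where z: "z \<in> Ctil rho" "z1 \<in> z"
    and rad: "\<forall>\<^sub>F e in at_right 0. ereal (cmod (z1 e - c e)) + ereal (rho e ^ m) < conv_radius (\<lambda>n. a n e)"
    using assms(1) by (rule conv_setE) (auto simp: rad_net_def conv_radius_def)
  have "negligible rho (\<lambda>e. z' e - z1 e)" using assms(2) z Ctil_eq_gclass gclass_memD by blast
  from negligible_diff[OF this gclass_memD[OF assms(3), THEN conjunct2]]
  have nd: "negligible rho (\<lambda>e. (z' e - c' e) - (z1 e - c e))" by (simp add: algebra_simps)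
  have "\<forall>\<^sub>F e in at_right 0. ereal (cmod (z' e - c' e) + rho e ^ (m+1)) < conv_radius (\<lambda>n. a n e)"
    using rad negligibleD[OF nd, of "m+2"] eventually_rho_le_quarter
  proof eventually_elim
    case (elim e)
    have "cmod (z' e - c' e) \<le> cmod (z1 e - c e) + cmod ((z' e - c' e) - (z1 e - c e))"
      using norm_triangle_ineq[of "z1 e - c e" "(z' e - c' e) - (z1 e - c e)"] by simp
    moreover have "rho e ^ (m+1) + 2 * rho e ^ (m+2) < rho e ^ m"
      using elim by (intro power_gap_quarter) auto
    moreover have "0 < rho e ^ (m+2)" using elim by simp
    ultimately have "cmod (z' e - c' e) + rho e ^ (m+1) < cmod (z1 e - c e) + rho e ^ m"
      using elim(2) by linarith
    then have "ereal (cmod (z' e - c' e) + rho e ^ (m+1)) < ereal (cmod (z1 e - c e)) + ereal (rho e ^ m)"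
      by simp
    then show ?case using elim(1) by (rule order.strict_trans)
  qed
  then show ?thesis by blast
qed

lemma conv_set_value_diff_negligible:
  assumes zS: "z \<in> conv_set rho a c" and z2: "z2 \<in> z" and c2: "c2 \<in> gclass rho c"
    and se: "strongly_equiv rho a a2"
    and dm: "\<forall>zh\<in>z. moderate rho (\<lambda>e. \<Sum>n. of_nat (Suc n) * a2 (Suc n) e * (zh e - c2 e) ^ n)"
    and w: "w \<in> z"
  shows "negligible rho (\<lambda>e. (\<Sum>n. a n e * (w e - c e) ^ n) - (\<Sum>n. a2 n e * (z2 e - c2 e) ^ n))"
proof -
  have zC: "z \<in> Ctil rho" using zS by (rule conv_setE)
  have eqz: "z = gclass rho z2" using Ctil_eq_gclass[OF zC z2] .
  have mc2: "moderate rho c2" and nc2: "negligible rho (\<lambda>e. c2 e - c e)" using gclass_memD[OF c2] by auto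
  have "negligible rho (\<lambda>e. w e - z2 e)" using w eqz gclass_memD by auto
  from negligible_add[OF this nc2]
  have nd: "negligible rho (\<lambda>e. (w e - c e) - (z2 e - c2 e))" by (simp add: algebra_simps)
  obtain m where rad: "\<forall>\<^sub>F e in at_right 0. ereal (cmod (z2 e - c2 e) + rho e ^ m) < conv_radius (\<lambda>n. a n e)"
    using conv_set_radius_margin[OF zS z2 c2] by blast
  show ?thesis
  proof (rule negligible_powser_change[OF se _ nd rad])
    show "moderate rho (\<lambda>e. z2 e - c2 e)" using Ctil_moderate[OF zC z2] mc2 by (rule moderate_diff)
  next
    fix x assume mx: "moderate rho x" and nx: "negligible rho (\<lambda>e. x e - (z2 e - c2 e))"
    have "(\<lambda>e. x e + c2 e) \<in> z" unfolding eqz gclass_def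
      using moderate_add[OF mx mc2] nx by (simp add: algebra_simps)
    from bspec[OF dm this]
    show "moderate rho (\<lambda>e. \<Sum>n. diffs (\<lambda>n. a2 n e) n * x e ^ n)" by (simp add: diffs_def)
  qed
qed

lemma conv_set_powser_moderate:
  assumes "z \<in> conv_set rho a c" "w \<in> z"
  shows "moderate rho (\<lambda>e. \<Sum>n. a n e * (w e - c e) ^ n)"
proof -
  obtain z2 c2 a2 where z2: "z2 \<in> z" "c2 \<in> gclass rho c" "strongly_equiv rho a a2"
    and conv: "hyperseries_converges_to rho (\<lambda>n e. a2 n e * (z2 e - c2 e) ^ n)
      (gclass rho (\<lambda>e. \<Sum>n. a2 n e * (z2 e - c2 e) ^ n))"
    and dm: "\<forall>zh\<in>z. moderate rho (\<lambda>e. \<Sum>n. of_nat (Suc n) * a2 (Suc n) e * (zh e - c2 e) ^ n)"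
    using assms(1) by (rule conv_setE)
  have "moderate rho (\<lambda>e. \<Sum>n. a2 n e * (z2 e - c2 e) ^ n)"
    using conv unfolding hyperseries_converges_to_def hyperlim_def
    by (blast intro: moderate_of_gclass_in_Ctil)
  from moderate_add[OF this negligible_imp_moderate[OF
      conv_set_value_diff_negligible[OF assms(1) z2 dm assms(2)]]]
  show ?thesis by simp
qed

lemma hypersum_powser_eq:
  assumes se: "strongly_equiv rho a a'" and wm: "weakly_moderate rho a'"
    and mh: "moderate_hypersums rho (\<lambda>n e. a' n e * u0 e ^ n)"
    and mu: "moderate rho u" and nd: "negligible rho (\<lambda>e. u e - u0 e)"
    and N: "N \<in> Ntil rho"
  shows "hypersum rho (\<lambda>n e. a n e * u e ^ n) (gzero rho) N =
    hypersum rho (\<lambda>n e. a' n e * u0 e ^ n) (gzero rho) N"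
  unfolding hypersum_def
proof (rule gclass_eqI)
  from negligible_add[OF negligible_powser_coeff_diff(1)[OF se mu]
      negligible_partial_powser_point_diff[OF wm mh nd N]]
  show "negligible rho (\<lambda>e. (\<Sum>n\<in>{ni rho (gzero rho) e..ni rho N e}. a n e * u e ^ n) -
      (\<Sum>n\<in>{ni rho (gzero rho) e..ni rho N e}. a' n e * u0 e ^ n))"
  proof (rule negligible_eventually_eq)
    show "\<forall>\<^sub>F e in at_right 0.
        (\<Sum>n\<in>{ni rho (gzero rho) e..ni rho N e}. a n e * u e ^ n) -
        (\<Sum>n\<in>{ni rho (gzero rho) e..ni rho N e}. a' n e * u0 e ^ n) =
        (\<Sum>n\<le>ni rho N e. (a n e - a' n e) * u e ^ n) +
        (\<Sum>n\<le>ni rho N e. a' n e * u e ^ n - a' n e * u0 e ^ n)"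
      using eventually_ni_gzero
      by eventually_elim
        (simp add: atLeast0AtMost sum_subtractf[symmetric] sum.distrib[symmetric] algebra_simps)
  qed
qed

lemma hypersum_in_Ctil:
  "moderate_hypersums rho b \<Longrightarrow> N \<in> Ntil rho \<Longrightarrow> hypersum rho b (gzero rho) N \<in> Ctil rho"
  unfolding hypersum_def moderate_hypersums_def
  by (intro gclass_in_Ctil, rule moderate_eventually_eq)
    (use eventually_ni_gzero in \<open>auto elim: eventually_mono simp: atLeast0AtMost\<close>)

lemma hyperseries_conv_set:
  assumes zS: "z \<in> conv_set rho a c" and z': "z' \<in> z"
  shows "hyperseries rho (\<lambda>n e. a n e * (rep rho z e - c e) ^ n) =
    gclass rho (\<lambda>e. \<Sum>n. a n e * (z' e - c e) ^ n)"
proof -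
  obtain z2 c2 a2 where zC: "z \<in> Ctil rho" and z2: "z2 \<in> z" and c2: "c2 \<in> gclass rho c"
    and wm: "weakly_moderate rho a2" and se: "strongly_equiv rho a a2"
    and mh: "moderate_hypersums rho (\<lambda>n e. a2 n e * (z2 e - c2 e) ^ n)"
    and conv: "hyperseries_converges_to rho (\<lambda>n e. a2 n e * (z2 e - c2 e) ^ n)
      (gclass rho (\<lambda>e. \<Sum>n. a2 n e * (z2 e - c2 e) ^ n))"
    and dm: "\<forall>zh\<in>z. moderate rho (\<lambda>e. \<Sum>n. of_nat (Suc n) * a2 (Suc n) e * (zh e - c2 e) ^ n)"
    using zS by (rule conv_setE)
  have mc: "moderate rho c" using moderate_of_mem_gclass[OF c2] .
  have mu: "moderate rho (\<lambda>e. rep rho z e - c e)" using Ctil_rep(1)[OF zC] mc by (rule moderate_diff)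
  have "negligible rho (\<lambda>e. rep rho z e - z2 e)"
    using rep_in[OF zC] Ctil_eq_gclass[OF zC z2] gclass_memD by auto
  from negligible_add[OF this gclass_memD[OF c2, THEN conjunct2]]
  have nd: "negligible rho (\<lambda>e. (rep rho z e - c e) - (z2 e - c2 e))" by (simp add: algebra_simps)
  note hs_eq = hypersum_powser_eq[OF se wm mh mu nd]
  have "hyperseries_converges_to rho (\<lambda>n e. a n e * (rep rho z e - c e) ^ n)
      (gclass rho (\<lambda>e. \<Sum>n. a2 n e * (z2 e - c2 e) ^ n))"
    using conv hyperlim_cong[OF hs_eq] unfolding hyperseries_converges_to_def by simp
  then have "hyperseries rho (\<lambda>n e. a n e * (rep rho z e - c e) ^ n) =
      gclass rho (\<lambda>e. \<Sum>n. a2 n e * (z2 e - c2 e) ^ n)"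
    by (rule hyperseries_eqI) (simp add: hs_eq hypersum_in_Ctil[OF mh])
  also have "\<dots> = gclass rho (\<lambda>e. \<Sum>n. a n e * (z' e - c e) ^ n)"
    using conv_set_value_diff_negligible[OF zS z2 c2 se dm z']
    by (intro gclass_eqI) (simp add: negligible_minus[where x = "\<lambda>e. _ e - _ e", simplified])
  finally show ?thesis .
qed

lemma interior_conv_set_higher_deriv_moderate_pos:
  assumes mc: "moderate rho c"
    and zU: "z \<in> (sharp_topology rho) interior_of (conv_set rho a c)" and z': "z' \<in> z"
    and k: "0 < k"
  shows "moderate rho (\<lambda>e. (deriv ^^ k) (\<lambda>w. \<Sum>n. a n e * (w - c e) ^ n) (z' e))"
proof -
  define V where "V e w = (\<Sum>n. a n e * (w - c e) ^ n)" for e w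
  have zS: "z \<in> conv_set rho a c" using interior_of_subset zU by (rule subsetD)
  then have zC: "z \<in> Ctil rho" by (rule conv_setE)
  obtain p where ball: "sharp_ball rho z (drho_pow rho p) \<subseteq> conv_set rho a c"
    using sharp_interior_contains_drho_ball[OF zU zC] by blast
  obtain m where rad: "\<forall>\<^sub>F e in at_right 0. ereal (cmod (z' e - c e) + rho e ^ m) < conv_radius (\<lambda>n. a n e)"
    using conv_set_radius_margin[OF zS z' gclass_self[OF mc]] by blast
  define q where "q = max p m + 1"
  have "\<forall>\<^sub>F e in at_right 0. ereal (cmod (z' e - c e) + rho e ^ q) < conv_radius (\<lambda>n. a n e) \<and> 0 < rho e ^ q"
    using rad eventually_rho_in_unit
  proof eventually_elim
    case (elim e)
    then have "rho e ^ q \<le> rho e ^ m" unfolding q_def by (intro power_decreasing) auto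
    then have "ereal (cmod (z' e - c e) + rho e ^ q) \<le> ereal (cmod (z' e - c e) + rho e ^ m)"
      by simp
    then have "ereal (cmod (z' e - c e) + rho e ^ q) < conv_radius (\<lambda>n. a n e)"
      using elim(1) by (rule order.strict_trans1)
    then show ?case using elim(2) by simp
  qed
  then obtain w where w: "\<forall>\<^sub>F e in at_right 0. w e \<in> cball (z' e) (rho e ^ q) \<and>
      cmod ((deriv ^^ k) (V e) (z' e)) \<le> fact k * (cmod (V e (w e)) + 1) / (rho e ^ q) ^ k"
    unfolding V_def using k by (rule eventually_higher_deriv_powser_bound)
  have "\<forall>\<^sub>F e in at_right 0. cmod (w e - z' e) \<le> rho e ^ (p+1)"
    using w eventually_rho_in_unit
  proof eventually_elim
    case (elim e)
    then have "rho e ^ q \<le> rho e ^ (p+1)" unfolding q_def by (intro power_decreasing) auto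
    then show ?case using elim by (simp add: dist_norm norm_minus_commute)
  qed
  from gclass_in_sharp_ball_drho[OF zC z' this] ball
  have wS: "gclass rho w \<in> conv_set rho a c" by blast
  then have "moderate rho w" by (blast elim: conv_setE intro: moderate_of_gclass_in_Ctil)
  with wS have "moderate rho (\<lambda>e. V e (w e))"
    unfolding V_def by (blast intro: conv_set_powser_moderate gclass_self)
  then have "moderate rho (\<lambda>e. complex_of_real (fact k) * (complex_of_real (cmod (V e (w e))) + 1) *
      complex_of_real (inverse (rho e ^ (q * k))))"
    by (intro moderate_mult moderate_add moderate_const moderate_norm moderate_inverse_rho_power)
  then have "moderate rho (\<lambda>e. complex_of_real (fact k * (cmod (V e (w e)) + 1) * inverse (rho e ^ (q * k))))"
    by simp
  then show ?thesis
  proof (rule moderate_dominated[of _ _ 1])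
    show "\<forall>\<^sub>F e in at_right 0. cmod ((deriv ^^ k) (\<lambda>w. \<Sum>n. a n e * (w - c e) ^ n) (z' e))
        \<le> 1 * cmod (complex_of_real (fact k * (cmod (V e (w e)) + 1) * inverse (rho e ^ (q * k))))"
      using w eventually_rho_in_unit
    proof eventually_elim
      case (elim e)
      then have "fact k * (cmod (V e (w e)) + 1) / (rho e ^ q) ^ k
          = cmod (complex_of_real (fact k * (cmod (V e (w e)) + 1) * inverse (rho e ^ (q * k))))"
        unfolding norm_of_real by (simp add: power_mult divide_inverse)
      then show ?case using elim unfolding V_def by simp
    qed
  qed
qed

lemma interior_conv_set_higher_deriv_moderate:
  assumes "moderate rho c"
    and "z \<in> (sharp_topology rho) interior_of (conv_set rho a c)" and "z' \<in> z"
  shows "moderate rho (\<lambda>e. (deriv ^^ k) (\<lambda>w. \<Sum>n. a n e * (w - c e) ^ n) (z' e))"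
proof (cases "k = 0")
  case True
  have "z \<in> conv_set rho a c" using interior_of_subset assms(2) by (rule subsetD)
  with True show ?thesis using conv_set_powser_moderate assms(3) by simp
next
  case False
  with assms show ?thesis by (intro interior_conv_set_higher_deriv_moderate_pos) auto
qed

end

theorem theorem3p1:
  fixes rho :: "real \<Rightarrow> real" and a :: "nat \<Rightarrow> real \<Rightarrow> complex" and c :: "real \<Rightarrow> complex"
  assumes "gauge rho"
    and "weakly_moderate rho a"
    and "moderate rho c"
  defines "U \<equiv> (sharp_topology rho) interior_of (conv_set rho a c)"
    and "f \<equiv> (\<lambda>z. hyperseries rho (\<lambda>n e. a n e * (rep rho z e - c e) ^ n))"
    and "v \<equiv> (\<lambda>e w. \<Sum>n. a n e * (w - c e) ^ n)"
  shows "\<exists>Omega. GH_defined_by rho U f Omega v"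
proof -
  interpret gauge_rho rho by (rule gauge_rho.intro) (rule assms(1))
  define Omega where "Omega e = eball (c e) (conv_radius (\<lambda>n. a n e))" for e
  have US: "U \<subseteq> conv_set rho a c" unfolding U_def by (rule interior_of_subset)
  have "U \<subseteq> Ctil rho" using US unfolding conv_set_def by blast
  moreover have "\<forall>e\<in>{0<..1}. open (Omega e) \<and> v e holomorphic_on Omega e"
    unfolding Omega_def v_def by (simp add: holomorphic_on_powser_eball)
  moreover have "(\<forall>\<^sub>F e in at_right 0. z' e \<in> Omega e) \<and> f z = gclass rho (\<lambda>e. v e (z' e)) \<and>
      (\<forall>k. moderate rho (\<lambda>e. (deriv ^^ k) (v e) (z' e)))" if z: "z \<in> U" "z' \<in> z" for z z'
  proof (intro conjI allI)
    have zS: "z \<in> conv_set rho a c" using US z(1) by blast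
    obtain m where "\<forall>\<^sub>F e in at_right 0. ereal (cmod (z' e - c e) + rho e ^ m) < conv_radius (\<lambda>n. a n e)"
      using conv_set_radius_margin[OF zS z(2) gclass_self[OF assms(3)]] by blast
    then show "\<forall>\<^sub>F e in at_right 0. z' e \<in> Omega e"
      using eventually_rho_in_unit
      by eventually_elim (auto simp: Omega_def dist_norm norm_minus_commute intro: le_less_trans[rotated])
    show "f z = gclass rho (\<lambda>e. v e (z' e))"
      unfolding f_def v_def by (rule hyperseries_conv_set[OF zS z(2)])
    show "moderate rho (\<lambda>e. (deriv ^^ k) (v e) (z' e))" for k
      unfolding v_def using assms(3) z(1)[unfolded U_def] z(2)
      by (rule interior_conv_set_higher_deriv_moderate)
  qed
  ultimately show ?thesis
    unfolding GH_defined_by_def U_def by (intro exI[of _ Omega]) (simp add: openin_interior_of)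
qed

end
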